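(* Let $A_L>0$ be the probability that the typical UE associates with a LoS ABS. For $r\ge h$, $$\mathbb{P}\big(R_{L,0}\in dr,\ R_{T,0}>R_B,\ \text{UE associates with a LoS ABS}\big)=A_L f_{\hat R_{L,0},1}(r)\,dr,$$ $$\mathbb{P}\big(R_{L,0}\in dr,\ R_{T,0}\le R_B,\ \text{UE associates with a LoS ABS}\big)=A_L f_{\hat R_{L,0},2}(r)\,dr,$$ where $$f_{\hat R_{L,0},1}(r)=\begin{cases}\frac{f_{R_{L,0}}(r)}{A_L}(1-Q_T), & h\le r\le l_{L,h},\\ \frac{f_{R_{L,0}}(r)}{A_L}(1-Q_T)\exp\Big(-2\pi\lambda_A\int_0^{\sqrt{\tau_{N|L}(r)^2-h^2}}xP_N(x)dx\Big), & r>l_{L,h},\end{cases}$$ and $f_{\hat R_{L,0},2}(r)=0$ for $r>l_{L,T}$, while for $h\le r\le l_{L,T}$: if $l_{L,h}>l_{L,T}$, $$f_{\hat R_{L,0},2}(r)=\frac{f_{R_{L,0}}(r)}{A_L}\big[\exp(-\pi\lambda_T\tau_{T|L}(r)^2)-(1-Q_T)\big];$$ if $l_{L,T}\ge l_{L,h}$, then $f_{\hat R_{L,0},2}(r)$ is given by the same expression for $h\le r\le l_{L,h}$, and for $l_{L,h}<r\le l_{L,T}$, $$f_{\hat R_{L,0},2}(r)=\frac{f_{R_{L,0}}(r)}{A_L}\big[\exp(-\pi\lambda_T\tau_{T|L}(r)^2)-(1-Q_T)\big]\exp\Big(-2\pi\lambda_A\int_0^{\sqrt{\tau_{N|L}(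r)^2-h^2}}xP_N(x)dx\Big).$$
   Context: The typical user (UE) is at the origin of the ground plane $\mathbb{R}^2$. Terrestrial base stations (TBSs) lie on the ground at the points of a homogeneous Poisson point process (HPPP) $\Phi_T$ of intensity $\lambda_T>0$. Aerial base stations (ABSs) all hover at height $h>0$; their horizontal positions form an HPPP $\Phi_A$ of intensity $\lambda_A>0$, independent of $\Phi_T$. Each ABS whose horizontal distance to the origin is $x$ is, independently of everything else, line-of-sight (LoS) with probability $P_L(x)$ and non-line-of-sight (NLoS) with probability $P_N(x)=1-P_L(x)$, where $P_L:[0,\infty)\to[0,1]$ is a given measurable function. $R_{L,0}$ (resp. $R_{N,0}$) denotes the Euclidean 3D distance $\sqrt{x^2+h^2}$ from the origin to the nearest LoS (resp. NLoS) ABS, and $R_{T,0}$ the distance from the origin to the nearest TBS. Fix $R_B>0$, exponents $\alpha_T,\alpha_L,\alpha_N>0$ and constants $\eta_T,\eta_L,\eta_N>0$. Association rule: the UE associates with the nearest TBS, the nearest LoS ABS, or the nearest NLoS ABS, whichever gives the largest of $P_{r,T}=\eta_T R_{T,0}^{-\alpha_T}\mathbf 1\{R_{T,0}\le R_B\}$, $P_{r,L}=\eta_L R_{L,0}^{-\alpha_L}$, $P_{r,N}=\eta_N R_{N,0}^{-\alpha_N}$. $Q_T=1-\exp(-\pi\lambda_T R_B^2)$. $f_{R_{L,0}}(r)=2\pi\lambda_A r P_L(\sqrt{r^2-h^2})\exp(-2\pi\lambda_A\int_0^{\sqrt{r^2-h^2}}xP_L(x)dx)$ for $r\ge h$. Define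 $l_{L,h}=(\eta_L/\eta_N)^{1/\alpha_L}h^{\alpha_N/\alpha_L}$, $l_{L,T}=(\eta_L/\eta_T)^{1/\alpha_L}R_B^{\alpha_T/\alpha_L}$, $\tau_{N|L}(r)=\max\{h,(\eta_N/\eta_L)^{1/\alpha_N}r^{\alpha_L/\alpha_N}\}$, $\tau_{T|L}(r)=(\eta_T/\eta_L)^{1/\alpha_T}r^{\alpha_L/\alpha_T}$. *)

theory Defs
  imports "HOL-Probability.Probability"
begin

definition ppp :: "'a measure \<Rightarrow> ('a \<Rightarrow> (real \<times> real) set) \<Rightarrow> (real \<times> real \<Rightarrow> real) \<Rightarrow> bool" where
  "ppp M \<Phi> \<rho> \<longleftrightarrow>
     (\<forall>\<omega>\<in>space M. \<forall>B. bounded B \<longrightarrow> finite (\<Phi> \<omega> \<inter> B)) \<and>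
     (\<forall>B\<in>sets borel. bounded B \<longrightarrow>
        (\<lambda>\<omega>. card (\<Phi> \<omega> \<inter> B)) \<in> measurable M (count_space UNIV) \<and>
        (\<forall>k. measure M {\<omega>\<in>space M. card (\<Phi> \<omega> \<inter> B) = k}
              = exp (- (LINT p:B|lborel. \<rho> p)) * (LINT p:B|lborel. \<rho> p) ^ k / fact k)) \<and>
     (\<forall>(n::nat) B. (\<forall>j<n. B j \<in> sets borel \<and> bounded (B j)) \<longrightarrow> disjoint_family_on B {..<n} \<longrightarrow>
        prob_space.indep_vars M (\<lambda>_. count_space UNIV) (\<lambda>j \<omega>. card (\<Phi> \<omega> \<inter> B j)) {..<n})"

definition indep_pps :: "'a measure \<Rightarrow> (nat \<Rightarrow> 'a \<Rightarrow> (real \<times> real) set) \<Rightarrow> nat set \<Rightarrow> bool" where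
  "indep_pps M \<Phi>s I \<longleftrightarrow>
     (\<forall>(n::nat) B. (\<forall>j<n. B j \<in> sets borel \<and> bounded (B j)) \<longrightarrow>
        prob_space.indep_vars M (\<lambda>_. PiM {..<n} (\<lambda>_. count_space UNIV))
          (\<lambda>i \<omega>. \<lambda>j\<in>{..<n}. card (\<Phi>s i \<omega> \<inter> B j)) I)"

definition nearest :: "(real \<times> real) set \<Rightarrow> real" where
  "nearest S = Inf (norm ` S)"


text \<open>3D distance from the origin to the nearest ABS (height h) of a horizontal position set.\<close>

definition dist3 :: "real \<Rightarrow> (real \<times> real) set \<Rightarrow> real" where
  "dist3 h S = sqrt ((nearest S)\<^sup>2 + h\<^sup>2)"

definition rx_T :: "real \<Rightarrow> real \<Rightarrow> real \<Rightarrow> (real \<times> real) set \<Rightarrow> real" where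
  "rx_T \<eta> \<alpha> RB S = (if S \<noteq> {} \<and> nearest S \<le> RB then \<eta> * nearest S powr (- \<alpha>) else 0)"

definition rx_A :: "real \<Rightarrow> real \<Rightarrow> real \<Rightarrow> (real \<times> real) set \<Rightarrow> real" where
  "rx_A \<eta> \<alpha> h S = (if S \<noteq> {} then \<eta> * dist3 h S powr (- \<alpha>) else 0)"

text \<open>The UE associates with the nearest LoS ABS (ties, which have probability zero,
  are resolved in favour of the LoS ABS).\<close>

definition assoc_LoS ::
  "real \<Rightarrow> real \<Rightarrow> real \<Rightarrow> real \<Rightarrow> real \<Rightarrow> real \<Rightarrow> real \<Rightarrow> real \<Rightarrow>
   (real \<times> real) set \<Rightarrow> (real \<times> real) set \<Rightarrow> (real \<times> real) set \<Rightarrow> bool" where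
  "assoc_LoS h RB \<alpha>T \<alpha>L \<alpha>N \<eta>T \<eta>L \<eta>N ST SL SN \<longleftrightarrow>
     SL \<noteq> {} \<and> rx_A \<eta>L \<alpha>L h SL \<ge> rx_T \<eta>T \<alpha>T RB ST \<and> rx_A \<eta>L \<alpha>L h SL \<ge> rx_A \<eta>N \<alpha>N h SN"

definition f_RL0 :: "real \<Rightarrow> real \<Rightarrow> (real \<Rightarrow> real) \<Rightarrow> real \<Rightarrow> real" where
  "f_RL0 lamA h P_L r = 2 * pi * lamA * r * P_L (sqrt (r\<^sup>2 - h\<^sup>2))
       * exp (- 2 * pi * lamA * (LINT x:{0..sqrt (r\<^sup>2 - h\<^sup>2)}|lborel. x * P_L x))"

end

theory Submission
  imports Defs
begin

text \<open>
  Condition on the horizontal distance \<open>x\<close> of the nearest LoS ABS, i.e. on its 3D distance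
  \<open>r = sqrt (x\<^sup>2 + h\<^sup>2)\<close>. The nearest-point distances of the three tiers are independent,
  and given \<open>r\<close> the UE associates with this ABS iff no NLoS ABS lies within horizontal distance
  \<open>sqrt ((tauNL r)\<^sup>2 - h\<^sup>2)\<close> and the nearest TBS lies either beyond \<open>RB\<close> or in
  \<open>[tauTL r, RB]\<close>. Both probabilities come from the void probabilities \<open>exp (- \<Lambda>)\<close> of the
  Poisson processes, with the mean measure \<open>\<Lambda>\<close> of a disc computed by radial integration.
  The law of \<open>x\<close> has density \<open>g x * exp (- G x)\<close>, where \<open>G\<close> is the primitive of \<open>g x = 2 * pi * lamA * x * P_L x\<close>;
  as \<open>P_L\<close> is merely measurable, this is obtained by pushing the measure \<open>g x dx\<close> forward
  along \<open>G\<close> instead of differentiating. Substituting \<open>r\<close> for \<open>x\<close> turns this density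
  into \<open>f_RL0\<close>.
\<close>

section \<open>Distance to the nearest point\<close>

definition locally_finite_set :: "(real \<times> real) set \<Rightarrow> bool" where
  "locally_finite_set S \<longleftrightarrow> (\<forall>B. bounded B \<longrightarrow> finite (S \<inter> B))"

text \<open>An empty configuration gets the junk value \<open>-1\<close>, so that ``no point in the closed disc
  of radius \<open>c\<close>'' reads \<open>nearest_dist S \<notin> {0..c}\<close>.\<close>

definition nearest_dist :: "(real \<times> real) set \<Rightarrow> real" where
  "nearest_dist S = (if S = {} then -1 else nearest S)"

lemma bdd_below_norm_image: "bdd_below (norm ` (S :: (real \<times> real) set))"
  by (rule bdd_belowI[of _ 0]) auto

lemma nearest_nonneg: "S \<noteq> {} \<Longrightarrow> 0 \<le> nearest S"
  unfolding nearest_def by (rule cInf_greatest) auto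

lemma nearest_le_norm: "p \<in> S \<Longrightarrow> nearest S \<le> norm p"
  unfolding nearest_def by (rule cInf_lower) (auto simp: bdd_below_norm_image)

lemma nearest_attained:
  assumes "locally_finite_set S" "S \<noteq> {}"
  obtains p where "p \<in> S" "norm p = nearest S"
proof -
  obtain p0 where p0: "p0 \<in> S" using assms(2) by auto
  define F where "F = S \<inter> cball 0 (norm p0)"
  have "finite (norm ` F)" "norm p0 \<in> norm ` F"
    using assms(1) p0 unfolding locally_finite_set_def F_def by auto
  then obtain q where q: "q \<in> F" "norm q = Min (norm ` F)"
    using Min_in[of "norm ` F"] by fastforce
  have "norm q \<le> norm p" if "p \<in> S" for p
  proof (cases "p \<in> F")
    case True
    then show ?thesis using q \<open>finite (norm ` F)\<close> by simp
  next
    case False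
    then have "norm p0 < norm p" using that by (auto simp: F_def)
    moreover have "norm q \<le> norm p0" using q(1) by (auto simp: F_def)
    ultimately show ?thesis by simp
  qed
  then have "nearest S = norm q"
    unfolding nearest_def using q(1) by (intro cInf_eq_minimum) (auto simp: F_def)
  then show thesis using q(1) by (intro that[of q]) (auto simp: F_def)
qed

lemma nearest_dist_cases: "nearest_dist S = -1 \<or> 0 \<le> nearest_dist S"
  using nearest_nonneg[of S] by (auto simp: nearest_dist_def)

lemma nearest_dist_in_Icc_iff:
  assumes "locally_finite_set S"
  shows "nearest_dist S \<in> {0..c} \<longleftrightarrow> S \<inter> cball 0 c \<noteq> {}"
proof
  assume *: "nearest_dist S \<in> {0..c}"
  then have "S \<noteq> {}" by (auto simp: nearest_dist_def)
  then obtain p where "p \<in> S" "norm p = nearest S" using nearest_attained assms(1) by blast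
  then show "S \<inter> cball 0 c \<noteq> {}" using * \<open>S \<noteq> {}\<close> by (auto simp: nearest_dist_def)
next
  assume "S \<inter> cball 0 c \<noteq> {}"
  then obtain p where "p \<in> S" "norm p \<le> c" by auto
  then show "nearest_dist S \<in> {0..c}"
    using nearest_le_norm[of p S] nearest_nonneg[of S] by (auto simp: nearest_dist_def)
qed

lemma nearest_dist_in_Ico_iff: "nearest_dist S \<in> {0..<a} \<longleftrightarrow> S \<inter> ball 0 a \<noteq> {}"
proof
  assume *: "nearest_dist S \<in> {0..<a}"
  then have ne: "S \<noteq> {}" by (auto simp: nearest_dist_def)
  then have "Inf (norm ` S) < a" using * by (auto simp: nearest_dist_def nearest_def)
  then obtain x where "x \<in> norm ` S" "x < a"
    using cInf_less_iff[of "norm ` S" a] ne bdd_below_norm_image by auto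
  then show "S \<inter> ball 0 a \<noteq> {}" by auto
next
  assume "S \<inter> ball 0 a \<noteq> {}"
  then obtain p where "p \<in> S" "norm p < a" by auto
  then show "nearest_dist S \<in> {0..<a}"
    using nearest_le_norm[of p S] nearest_nonneg[of S] by (auto simp: nearest_dist_def)
qed

section \<open>Radial integrals in the plane\<close>

lemma emeasure_cball_plane:
  "emeasure lborel (cball (0 :: real \<times> real) r) = ennreal (pi * (max 0 r)\<^sup>2)"
  using emeasure_cball[of r "0 :: real \<times> real"]
  by (cases "0 \<le> r") (simp_all add: unit_ball_vol_2 mult.commute power2_eq_square)

lemma sphere_plane_null: "sphere (0 :: real \<times> real) r \<in> null_sets lborel"
  using negligible_sphere[of "0 :: real \<times> real" r]
  by (auto simp: null_sets_completion_iff negligible_iff_null_sets)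

lemma nn_integral_annulus_area:
  assumes "0 \<le> a" "a \<le> b"
  shows "(\<integral>\<^sup>+x. ennreal (2 * pi * x) * indicator {a..b} x \<partial>lborel) = ennreal (pi * b\<^sup>2 - pi * a\<^sup>2)"
proof -
  have "(\<integral>\<^sup>+x\<in>{a..b}. ennreal (2 * pi * x) \<partial>lborel) = ennreal (pi * b\<^sup>2 - pi * a\<^sup>2)"
    using assms by (intro nn_integral_FTC_Icc[where F = "\<lambda>x. pi * x\<^sup>2"])
      (auto intro!: derivative_eq_intros)
  then show ?thesis by (simp add: mult.commute)
qed

lemma emeasure_density_indicator:
  assumes [measurable]: "C \<in> sets M" "B \<in> sets M"
  shows "emeasure (density M (indicator C)) B = emeasure M (C \<inter> B)"
proof -
  have "emeasure (density M (indicator C)) B = (\<integral>\<^sup>+x. indicator C x * indicator B x \<partial>M)"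
    by (rule emeasure_density) auto
  also have "\<dots> = (\<integral>\<^sup>+x. indicator (C \<inter> B) x \<partial>M)"
    by (intro nn_integral_cong) (simp split: split_indicator)
  finally show ?thesis by simp
qed

lemma disc_sets_borel [measurable]:
  "cball (0 :: real \<times> real) a \<in> sets borel" "ball (0 :: real \<times> real) a \<in> sets borel"
  by auto

lemma distr_norm_disc:
  assumes a: "0 \<le> a"
  shows "distr (density lborel (indicator (cball (0 :: real \<times> real) a))) borel norm
        = density lborel (\<lambda>x. ennreal (2 * pi * x) * indicator {0..a} x)"
    (is "distr ?disc _ _ = ?radial")
proof (rule measure_eqI_lessThan)
  fix c :: real
  define m where "m = max 0 (min c a)"
  have "emeasure (distr ?disc borel norm) {c<..} = emeasure ?disc {p. c < norm p}"
    by (subst emeasure_distr) (auto simp: vimage_def)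
  also have "\<dots> = emeasure lborel (cball (0 :: real \<times> real) a \<inter> {p. c < norm p})"
    by (rule emeasure_density_indicator) auto
  also have "cball 0 a \<inter> {p. c < norm p} = cball 0 a - cball (0 :: real \<times> real) (min c a)"
    by auto
  also have "emeasure lborel \<dots> = emeasure lborel (cball (0 :: real \<times> real) a) - emeasure lborel (cball (0 :: real \<times> real) (min c a))"
    using emeasure_lborel_cball_finite[of "0 :: real \<times> real" "min c a"] by (intro emeasure_Diff) auto
  also have "\<dots> = ennreal (pi * a\<^sup>2 - pi * m\<^sup>2)"
    using a by (simp add: emeasure_cball_plane ennreal_minus power_mono m_def)
  finally have L: "emeasure (distr ?disc borel norm) {c<..} = ennreal (pi * a\<^sup>2 - pi * m\<^sup>2)" .
  have "AE x in lborel. x \<noteq> c \<and> x \<noteq> a"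
    using AE_lborel_singleton[of c] AE_lborel_singleton[of a] by (simp add: AE_conj_iff)
  then have "AE x in lborel. ennreal (2 * pi * x) * indicator {0..a} x * indicator {c<..} x
      = ennreal (2 * pi * x) * indicator {m..a} x"
    by (rule eventually_mono) (auto simp: m_def split: split_indicator)
  then have "emeasure ?radial {c<..} = (\<integral>\<^sup>+x. ennreal (2 * pi * x) * indicator {m..a} x \<partial>lborel)"
    by (subst emeasure_density) (auto intro: nn_integral_cong_AE)
  also have "\<dots> = ennreal (pi * a\<^sup>2 - pi * m\<^sup>2)"
    using a by (intro nn_integral_annulus_area) (auto simp: m_def)
  finally show "emeasure (distr ?disc borel norm) {c<..} = emeasure ?radial {c<..}"
    unfolding L by simp
  show "emeasure (distr ?disc borel norm) {c<..} < \<infinity>"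
    unfolding L by simp
qed auto

lemma set_integral_radial_cball:
  fixes q :: "real \<Rightarrow> real"
  assumes [measurable]: "q \<in> borel_measurable borel" and a: "0 \<le> a"
  shows "(LINT p:cball (0 :: real \<times> real) a|lborel. q (norm p)) = 2 * pi * (LINT x:{0..a}|lborel. x * q x)"
proof -
  have "(LINT p:cball (0 :: real \<times> real) a|lborel. q (norm p))
      = integral\<^sup>L (density lborel (\<lambda>p. ennreal (indicator (cball (0 :: real \<times> real) a) p))) (\<lambda>p. q (norm p))"
    unfolding set_lebesgue_integral_def by (subst integral_density) auto
  also have "(\<lambda>p. ennreal (indicator (cball (0 :: real \<times> real) a) p)) = indicator (cball 0 a)"
    by (auto split: split_indicator)
  also have "integral\<^sup>L (density lborel (indicator (cball (0 :: real \<times> real) a))) (\<lambda>p. q (norm p))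
      = integral\<^sup>L (distr (density lborel (indicator (cball (0 :: real \<times> real) a))) borel norm) q"
    by (subst integral_distr) auto
  also have "\<dots> = integral\<^sup>L (density lborel (\<lambda>x. ennreal (2 * pi * x * indicator {0..a} x))) q"
    unfolding distr_norm_disc[OF a]
    by (intro arg_cong2[where f = "\<lambda>M f. integral\<^sup>L M f"] arg_cong2[where f = density] refl ext)
       (auto split: split_indicator)
  also have "\<dots> = integral\<^sup>L lborel (\<lambda>x. (2 * pi * x * indicator {0..a} x) *\<^sub>R q x)"
    by (subst integral_density) (auto split: split_indicator)
  also have "\<dots> = integral\<^sup>L lborel (\<lambda>x. 2 * pi * (indicator {0..a} x *\<^sub>R (x * q x)))"
    by (intro Bochner_Integration.integral_cong) (auto split: split_indicator)
  also have "\<dots> = 2 * pi * (LINT x:{0..a}|lborel. x * q x)"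
    unfolding set_lebesgue_integral_def by (rule integral_mult_right_zero)
  finally show ?thesis .
qed

lemma set_integral_radial_ball:
  fixes q :: "real \<Rightarrow> real"
  assumes [measurable]: "q \<in> borel_measurable borel" and "0 \<le> a"
  shows "(LINT p:ball (0 :: real \<times> real) a|lborel. q (norm p)) = 2 * pi * (LINT x:{0..a}|lborel. x * q x)"
proof -
  have "(LINT p:ball (0 :: real \<times> real) a|lborel. q (norm p)) = (LINT p:cball (0 :: real \<times> real) a|lborel. q (norm p))"
    unfolding set_lebesgue_integral_def using AE_not_in[OF sphere_plane_null[of a]]
    by (intro integral_cong_AE) (auto split: split_indicator elim!: eventually_mono)
  then show ?thesis using set_integral_radial_cball[of q a] assms by simp
qed

section \<open>Void probabilities and nearest distances of Poisson processes\<close>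

lemma ppp_locally_finite: "ppp M \<Phi> \<rho> \<Longrightarrow> \<omega> \<in> space M \<Longrightarrow> locally_finite_set (\<Phi> \<omega>)"
  unfolding ppp_def locally_finite_set_def by blast

lemma ppp_count_measurable:
  "ppp M \<Phi> \<rho> \<Longrightarrow> B \<in> sets borel \<Longrightarrow> bounded B \<Longrightarrow>
    (\<lambda>\<omega>. card (\<Phi> \<omega> \<inter> B)) \<in> measurable M (count_space UNIV)"
  unfolding ppp_def by blast

lemma ppp_void_eq_count:
  assumes "ppp M \<Phi> \<rho>" "bounded B"
  shows "{\<omega> \<in> space M. \<Phi> \<omega> \<inter> B = {}} = {\<omega> \<in> space M. card (\<Phi> \<omega> \<inter> B) = 0}"
  using assms unfolding ppp_def by auto

lemma ppp_void_prob:
  assumes "ppp M \<Phi> \<rho>" "B \<in> sets borel" "bounded B"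
  shows "measure M {\<omega> \<in> space M. \<Phi> \<omega> \<inter> B = {}} = exp (- (LINT p:B|lborel. \<rho> p))"
proof -
  have "measure M {\<omega> \<in> space M. card (\<Phi> \<omega> \<inter> B) = 0}
      = exp (- (LINT p:B|lborel. \<rho> p)) * (LINT p:B|lborel. \<rho> p) ^ 0 / fact 0"
    using assms unfolding ppp_def by blast
  then show ?thesis using ppp_void_eq_count[OF assms(1,3)] by simp
qed

lemma ppp_nearest_dist_Icc_eq:
  assumes "ppp M \<Phi> \<rho>"
  shows "{\<omega> \<in> space M. nearest_dist (\<Phi> \<omega>) \<in> {0..c}} = {\<omega> \<in> space M. card (\<Phi> \<omega> \<inter> cball 0 c) \<noteq> 0}"
proof (intro Collect_cong conj_cong refl)
  fix \<omega> assume "\<omega> \<in> space M"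
  then have "locally_finite_set (\<Phi> \<omega>)" by (rule ppp_locally_finite[OF assms(1)])
  then show "nearest_dist (\<Phi> \<omega>) \<in> {0..c} \<longleftrightarrow> card (\<Phi> \<omega> \<inter> cball 0 c) \<noteq> 0"
    using nearest_dist_in_Icc_iff by (simp add: card_eq_0_iff locally_finite_set_def)
qed

definition nonneg_Icc_sets :: "real set set" where
  "nonneg_Icc_sets = insert UNIV {{0..c} | c. 0 \<le> c}"

lemma Int_stable_nonneg_Icc_sets: "Int_stable nonneg_Icc_sets"
proof (rule Int_stableI)
  fix a b assume "a \<in> nonneg_Icc_sets" "b \<in> nonneg_Icc_sets"
  then show "a \<inter> b \<in> nonneg_Icc_sets" unfolding nonneg_Icc_sets_def
  proof (elim insertE CollectE exE conjE)
    fix c d :: real assume "a = {0..c}" "0 \<le> c" "b = {0..d}" "0 \<le> d"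
    then have "a \<inter> b = {0..min c d}" by auto
    then show "a \<inter> b \<in> insert UNIV {{0..c} | c. 0 \<le> c}" using \<open>0 \<le> c\<close> \<open>0 \<le> d\<close> by auto
  qed auto
qed

lemma ppp_nearest_dist_measurable_nonneg_Icc:
  assumes "ppp M \<Phi> \<rho>"
  shows "(\<lambda>\<omega>. nearest_dist (\<Phi> \<omega>)) \<in> measurable M (sigma UNIV nonneg_Icc_sets)"
proof (rule measurable_measure_of)
  fix A assume "A \<in> nonneg_Icc_sets"
  then consider "A = UNIV" | c where "0 \<le> c" "A = {0..c}" unfolding nonneg_Icc_sets_def by auto
  then show "(\<lambda>\<omega>. nearest_dist (\<Phi> \<omega>)) -` A \<inter> space M \<in> sets M"
  proof cases
    case 2
    have "(\<lambda>\<omega>. card (\<Phi> \<omega> \<inter> cball 0 c)) -` (UNIV - {0}) \<inter> space M \<in> sets M"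
      by (rule measurable_sets[OF ppp_count_measurable[OF assms]]) auto
    then show ?thesis using ppp_nearest_dist_Icc_eq[OF assms] unfolding 2(2)
      by (simp add: vimage_def Int_def conj_commute)
  qed simp
qed (auto simp: nonneg_Icc_sets_def)

text \<open>The sets \<open>{0..c}\<close> generate far fewer than the Borel sets, but \<open>nearest_dist\<close> only
  takes values in \<open>{-1} \<union> [0, \<infinity>)\<close>, where it is fixed by the following function, which is
  measurable from them into \<open>borel\<close>.\<close>

definition neg_to_minus_one :: "real \<Rightarrow> real" where
  "neg_to_minus_one z = (if z < 0 then -1 else z)"

lemma neg_to_minus_one_nearest_dist: "neg_to_minus_one (nearest_dist S) = nearest_dist S"
  using nearest_dist_cases[of S] by (auto simp: neg_to_minus_one_def)

lemma neg_to_minus_one_measurable: "neg_to_minus_one \<in> measurable (sigma UNIV nonneg_Icc_sets) borel"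
proof (rule borel_measurableI_le)
  have sets_eq: "sets (sigma UNIV nonneg_Icc_sets) = sigma_sets UNIV nonneg_Icc_sets"
    by (rule sets_measure_of) auto
  have "(\<Union>n::nat. {0..real n}) \<in> sigma_sets UNIV nonneg_Icc_sets"
    by (intro sigma_sets.Union sigma_sets.Basic) (auto simp: nonneg_Icc_sets_def)
  then have "UNIV - (\<Union>n::nat. {0..real n}) \<in> sigma_sets UNIV nonneg_Icc_sets"
    by (rule sigma_sets.Compl)
  also have "UNIV - (\<Union>n::nat. {0..real n}) = {x. x < 0}"
    using real_arch_simple by (force simp: not_le)
  finally have neg: "{x :: real. x < 0} \<in> sigma_sets UNIV nonneg_Icc_sets" .
  fix y :: real
  consider "y < -1" | "-1 \<le> y" "y < 0" | "0 \<le> y" by linarith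
  then have "{x. neg_to_minus_one x \<le> y} \<in> sigma_sets UNIV nonneg_Icc_sets"
  proof cases
    case 2
    then have "{x. neg_to_minus_one x \<le> y} = {x. x < 0}" by (auto simp: neg_to_minus_one_def)
    then show ?thesis using neg by simp
  next
    case 3
    then have "{x. neg_to_minus_one x \<le> y} = {x. x < 0} \<union> {0..y}" by (auto simp: neg_to_minus_one_def)
    moreover have "{0..y} \<in> sigma_sets UNIV nonneg_Icc_sets"
      using 3 by (intro sigma_sets.Basic) (auto simp: nonneg_Icc_sets_def)
    ultimately show ?thesis using neg by (simp add: sigma_sets_Un)
  qed (auto simp: neg_to_minus_one_def sigma_sets.Empty)
  then show "{x \<in> space (sigma UNIV nonneg_Icc_sets). neg_to_minus_one x \<le> y} \<in> sets (sigma UNIV nonneg_Icc_sets)"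
    by (simp add: sets_eq)
qed

lemma ppp_nearest_dist_borel_measurable:
  assumes "ppp M \<Phi> \<rho>"
  shows "(\<lambda>\<omega>. nearest_dist (\<Phi> \<omega>)) \<in> borel_measurable M"
  using measurable_comp[OF ppp_nearest_dist_measurable_nonneg_Icc[OF assms] neg_to_minus_one_measurable]
  by (simp add: comp_def neg_to_minus_one_nearest_dist)

context prob_space
begin

lemma indep_pps_disc_count_events:
  fixes \<Phi>s :: "nat \<Rightarrow> 'a \<Rightarrow> (real \<times> real) set" and P :: "nat \<Rightarrow> nat \<Rightarrow> bool" and c :: "nat \<Rightarrow> real"
  assumes I: "finite I" "I \<noteq> {}" and indep: "indep_pps M \<Phi>s I"
  shows "prob (\<Inter>j\<in>I. {\<omega> \<in> space M. P j (card (\<Phi>s j \<omega> \<inter> cball 0 (c j)))})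
    = (\<Prod>j\<in>I. prob {\<omega> \<in> space M. P j (card (\<Phi>s j \<omega> \<inter> cball 0 (c j)))})"
proof -
  obtain n where n: "I \<subseteq> {..<n}" using finite_nat_bounded[OF I(1)] by blast
  let ?P = "PiM {..<n} (\<lambda>_. count_space (UNIV :: nat set))"
  define V where "V i \<omega> = (\<lambda>j\<in>{..<n}. card (\<Phi>s i \<omega> \<inter> cball 0 (c j)))" for i \<omega>
  have V_indep: "indep_vars (\<lambda>_. ?P) V I"
    using indep unfolding indep_pps_def V_def by (auto simp: borel_closed)
  define X where "X j = {v \<in> space ?P. P j (v j)}" for j
  have X_sets: "X j \<in> sets ?P" if "j \<in> I" for j
  proof -
    have "j \<in> {..<n}" using that n by auto
    then have "Measurable.pred ?P (\<lambda>v. P j (v j))" by measurable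
    then show ?thesis unfolding X_def by (simp add: pred_def)
  qed
  have events_eq: "{\<omega> \<in> space M. P j (card (\<Phi>s j \<omega> \<inter> cball 0 (c j)))} = V j -` X j \<inter> space M"
    if "j \<in> I" for j
    using that n by (auto simp: X_def V_def space_PiM)
  have "prob (\<Inter>j\<in>I. V j -` X j \<inter> space M) = (\<Prod>j\<in>I. prob (V j -` X j \<inter> space M))"
    by (rule indep_varsD[OF V_indep]) (auto simp: X_sets I)
  moreover have "(\<Inter>j\<in>I. {\<omega> \<in> space M. P j (card (\<Phi>s j \<omega> \<inter> cball 0 (c j)))}) = (\<Inter>j\<in>I. V j -` X j \<inter> space M)"
    using events_eq by (intro INF_cong) auto
  ultimately show ?thesis using events_eq by simp
qed

lemma indep_vars_nearest_dist:
  fixes \<Phi>s :: "nat \<Rightarrow> 'a \<Rightarrow> (real \<times> real) set"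
  assumes I: "finite I" "I \<noteq> {}"
    and ppp: "\<And>i. i \<in> I \<Longrightarrow> \<exists>\<rho>. ppp M (\<Phi>s i) \<rho>"
    and indep: "indep_pps M \<Phi>s I"
  shows "indep_vars (\<lambda>_. borel) (\<lambda>i \<omega>. nearest_dist (\<Phi>s i \<omega>)) I"
proof -
  let ?Z = "\<lambda>i \<omega>. nearest_dist (\<Phi>s i \<omega>)"
  let ?E = "sigma UNIV nonneg_Icc_sets"
  have "indep_vars (\<lambda>_. ?E) ?Z I"
  proof (subst indep_vars_finite[where E = "\<lambda>_. nonneg_Icc_sets"])
    show "sets ?E = sigma_sets (space ?E) nonneg_Icc_sets" for i :: nat
      by (simp add: sets_measure_of)
    show "random_variable ?E (?Z i)" if "i \<in> I" for i
      using ppp[OF that] ppp_nearest_dist_measurable_nonneg_Icc by blast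
    show "space ?E \<in> nonneg_Icc_sets" for i :: nat by (simp add: nonneg_Icc_sets_def)
    show "\<forall>A \<in> (\<Pi> i\<in>I. nonneg_Icc_sets).
        prob (\<Inter>j\<in>I. ?Z j -` A j \<inter> space M) = (\<Prod>j\<in>I. prob (?Z j -` A j \<inter> space M))"
    proof
      fix A assume "A \<in> (\<Pi> i\<in>I. nonneg_Icc_sets)"
      then have "\<forall>j\<in>I. \<exists>c. A j = UNIV \<or> A j = {0..c}"
        by (force simp: nonneg_Icc_sets_def)
      then obtain c where c: "\<And>j. j \<in> I \<Longrightarrow> A j = UNIV \<or> A j = {0..c j}"
        by metis
      have events_eq: "?Z j -` A j \<inter> space M
          = {\<omega> \<in> space M. A j = UNIV \<or> card (\<Phi>s j \<omega> \<inter> cball 0 (c j)) \<noteq> 0}" if j: "j \<in> I" for j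
      proof (cases "A j = UNIV")
        case False
        then have "?Z j -` A j \<inter> space M = {\<omega> \<in> space M. nearest_dist (\<Phi>s j \<omega>) \<in> {0..c j}}"
          using c[OF j] by auto
        also obtain \<rho> where "ppp M (\<Phi>s j) \<rho>" using ppp[OF j] by blast
        then have "{\<omega> \<in> space M. nearest_dist (\<Phi>s j \<omega>) \<in> {0..c j}}
            = {\<omega> \<in> space M. card (\<Phi>s j \<omega> \<inter> cball 0 (c j)) \<noteq> 0}"
          by (rule ppp_nearest_dist_Icc_eq)
        finally show ?thesis using False by simp
      qed auto
      then show "prob (\<Inter>j\<in>I. ?Z j -` A j \<inter> space M) = (\<Prod>j\<in>I. prob (?Z j -` A j \<inter> space M))"
        using indep_pps_disc_count_events[OF I indep, of "\<lambda>j k. A j = UNIV \<or> k \<noteq> 0" c]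
        by (simp cong: INF_cong prod.cong)
    qed
  qed (use I Int_stable_nonneg_Icc_sets in auto)
  then have "indep_vars (\<lambda>_. borel) (\<lambda>i \<omega>. neg_to_minus_one (?Z i \<omega>)) I"
    by (rule indep_vars_compose2) (rule neg_to_minus_one_measurable)
  then show ?thesis by (simp add: neg_to_minus_one_nearest_dist)
qed

lemma ppp_radial_nearest_dist_beyond:
  assumes ppp: "ppp M \<Phi> (\<lambda>p. q (norm p))" and [measurable]: "q \<in> borel_measurable borel" and "0 \<le> a"
  shows "prob {\<omega> \<in> space M. nearest_dist (\<Phi> \<omega>) \<notin> {0..a}} = exp (- 2 * pi * (LINT x:{0..a}|lborel. x * q x))"
    and "prob {\<omega> \<in> space M. nearest_dist (\<Phi> \<omega>) \<notin> {0..<a}} = exp (- 2 * pi * (LINT x:{0..a}|lborel. x * q x))"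
proof -
  have "{\<omega> \<in> space M. nearest_dist (\<Phi> \<omega>) \<notin> {0..a}} = {\<omega> \<in> space M. \<Phi> \<omega> \<inter> cball 0 a = {}}"
    using nearest_dist_in_Icc_iff[OF ppp_locally_finite[OF ppp]] by auto
  then show "prob {\<omega> \<in> space M. nearest_dist (\<Phi> \<omega>) \<notin> {0..a}} = exp (- 2 * pi * (LINT x:{0..a}|lborel. x * q x))"
    using ppp_void_prob[OF ppp, of "cball 0 a"] set_integral_radial_cball[of q a] assms by simp
  have "{\<omega> \<in> space M. nearest_dist (\<Phi> \<omega>) \<notin> {0..<a}} = {\<omega> \<in> space M. \<Phi> \<omega> \<inter> ball 0 a = {}}"
    using nearest_dist_in_Ico_iff by auto
  then show "prob {\<omega> \<in> space M. nearest_dist (\<Phi> \<omega>) \<notin> {0..<a}} = exp (- 2 * pi * (LINT x:{0..a}|lborel. x * q x))"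
    using ppp_void_prob[OF ppp, of "ball 0 a"] set_integral_radial_ball[of q a] assms by simp
qed

lemma ppp_radial_nearest_dist_Icc:
  assumes ppp: "ppp M \<Phi> (\<lambda>p. q (norm p))" and [measurable]: "q \<in> borel_measurable borel"
    and "0 \<le> a" "a \<le> b"
  shows "prob {\<omega> \<in> space M. nearest_dist (\<Phi> \<omega>) \<in> {a..b}}
    = exp (- 2 * pi * (LINT x:{0..a}|lborel. x * q x)) - exp (- 2 * pi * (LINT x:{0..b}|lborel. x * q x))"
proof -
  have [measurable]: "(\<lambda>\<omega>. nearest_dist (\<Phi> \<omega>)) \<in> borel_measurable M"
    by (rule ppp_nearest_dist_borel_measurable[OF ppp])
  let ?A = "{\<omega> \<in> space M. nearest_dist (\<Phi> \<omega>) \<notin> {0..<a}}"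
  let ?B = "{\<omega> \<in> space M. nearest_dist (\<Phi> \<omega>) \<notin> {0..b}}"
  have "{\<omega> \<in> space M. nearest_dist (\<Phi> \<omega>) \<in> {a..b}} = ?A - ?B" using assms by auto
  moreover have "prob (?A - ?B) = prob ?A - prob ?B"
    using assms by (intro finite_measure_Diff) auto
  ultimately show ?thesis
    using ppp_radial_nearest_dist_beyond[OF ppp] assms by simp
qed

end

section \<open>The law of the nearest distance\<close>

lemma borel_measurable_primitive:
  fixes g :: "real \<Rightarrow> real"
  assumes [measurable]: "g \<in> borel_measurable borel"
  shows "(\<lambda>u. LINT x:{0..u}|lborel. g x) \<in> borel_measurable borel"
proof -
  have "(\<lambda>(u, x). indicator {0..u} x *\<^sub>R g x) = (\<lambda>w. (if 0 \<le> snd w \<and> snd w \<le> fst w then 1 else 0) * g (snd w))"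
    by (auto simp: fun_eq_iff split: split_indicator)
  also have "\<dots> \<in> borel_measurable (borel \<Otimes>\<^sub>M lborel)" by measurable
  finally show ?thesis unfolding set_lebesgue_integral_def
    by (rule lborel.borel_measurable_lebesgue_integral)
qed

lemma set_integral_lborel_singleton: "(LINT x:{a}|lborel. g x) = (0 :: real)" for g :: "real \<Rightarrow> real"
proof -
  have "AE x in lborel. indicator {a} x *\<^sub>R g x = (0 :: real)"
    using AE_lborel_singleton[of a] by (rule eventually_mono) (auto split: split_indicator)
  then show ?thesis unfolding set_lebesgue_integral_def by (rule integral_eq_zero_AE)
qed

lemma set_integrable_bounded:
  fixes g :: "real \<Rightarrow> real"
  assumes [measurable]: "g \<in> borel_measurable borel" "A \<in> sets borel" and "A \<subseteq> {a..b}"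
    and "\<And>x. x \<in> A \<Longrightarrow> \<bar>g x\<bar> \<le> C"
  shows "set_integrable lborel A g"
  unfolding set_integrable_def
proof (rule integrableI_bounded_set_indicator[where B = C])
  have "emeasure lborel A \<le> emeasure lborel {a..b}" using assms(3) by (intro emeasure_mono) auto
  moreover have "emeasure lborel {a..b} < \<infinity>" by (cases "a \<le> b") auto
  ultimately show "emeasure lborel A < \<infinity>" by (rule le_less_trans)
qed (use assms in auto)

lemma nn_integral_indicator_eq_set_integral:
  fixes g :: "real \<Rightarrow> real"
  assumes [measurable]: "g \<in> borel_measurable borel" "A \<in> sets borel" and "A \<subseteq> {a..b}"
    and g: "\<And>x. x \<in> A \<Longrightarrow> 0 \<le> g x \<and> g x \<le> C"
  shows "(\<integral>\<^sup>+x. indicator A x * ennreal (g x) \<partial>lborel) = ennreal (LINT x:A|lborel. g x)"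
proof -
  have "set_integrable lborel A g"
    by (rule set_integrable_bounded[OF assms(1-3), of C]) (use g in fastforce)
  then have "(\<integral>\<^sup>+x. ennreal (indicator A x *\<^sub>R g x) \<partial>lborel) = ennreal (LINT x:A|lborel. g x)"
    unfolding set_lebesgue_integral_def set_integrable_def using g
    by (intro nn_integral_eq_integral) (auto split: split_indicator)
  moreover have "(\<integral>\<^sup>+x. indicator A x * ennreal (g x) \<partial>lborel) = (\<integral>\<^sup>+x. ennreal (indicator A x *\<^sub>R g x) \<partial>lborel)"
    by (intro nn_integral_cong) (auto split: split_indicator)
  ultimately show ?thesis by simp
qed

lemma primitive_increment:
  fixes g :: "real \<Rightarrow> real"
  assumes [measurable]: "g \<in> borel_measurable borel"
    and g: "\<And>x. x \<in> {0..c} \<Longrightarrow> 0 \<le> g x \<and> g x \<le> C" and xy: "0 \<le> x" "x \<le> y" "y \<le> c"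
  shows "(LINT t:{0..y}|lborel. g t) = (LINT t:{0..x}|lborel. g t) + (LINT t:{x<..y}|lborel. g t)"
    and "0 \<le> (LINT t:{x<..y}|lborel. g t)"
    and "(LINT t:{x<..y}|lborel. g t) \<le> C * (y - x)"
proof -
  have int: "set_integrable lborel A g" if "A \<in> sets borel" "A \<subseteq> {0..c}" for A
    by (rule set_integrable_bounded[OF assms(1) that, of C]) (use that g in fastforce)
  have "{0..y} = {0..x} \<union> {x<..y}" using xy by auto
  then have "(LINT t:{0..y}|lborel. g t) = (LINT t:{0..x} \<union> {x<..y}|lborel. g t)" by simp
  also have "\<dots> = (LINT t:{0..x}|lborel. g t) + (LINT t:{x<..y}|lborel. g t)"
    using xy by (intro set_integral_Un int) auto
  finally show "(LINT t:{0..y}|lborel. g t) = (LINT t:{0..x}|lborel. g t) + (LINT t:{x<..y}|lborel. g t)" .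
  show "0 \<le> (LINT t:{x<..y}|lborel. g t)"
    using xy g unfolding set_lebesgue_integral_def
    by (intro integral_nonneg_AE) (auto split: split_indicator)
  have "(LINT t:{x<..y}|lborel. g t) \<le> (LINT t:{x<..y}|lborel. C)"
    using xy g by (intro set_integral_mono int) (auto simp: set_integrable_def)
  then show "(LINT t:{x<..y}|lborel. g t) \<le> C * (y - x)" using xy by (simp add: set_integral_const mult.commute)
qed

lemma primitive_lipschitz_mono:
  fixes g :: "real \<Rightarrow> real"
  assumes [measurable]: "g \<in> borel_measurable borel" and c: "0 \<le> c"
    and g: "\<And>x. x \<in> {0..c} \<Longrightarrow> 0 \<le> g x \<and> g x \<le> C"
  defines "G \<equiv> \<lambda>x. LINT t:{0..x}|lborel. g t"
  shows "C-lipschitz_on {0..c} G" and "mono_on {0..c} G"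
proof -
  have incr: "G x \<le> G y \<and> G y - G x \<le> C * (y - x)" if "x \<in> {0..c}" "y \<in> {0..c}" "x \<le> y" for x y
  proof -
    have "0 \<le> x" "x \<le> y" "y \<le> c" using that by auto
    from primitive_increment[OF assms(1) g this] show ?thesis by (simp add: G_def)
  qed
  show "C-lipschitz_on {0..c} G"
  proof (rule lipschitz_onI)
    fix x y assume "x \<in> {0..c}" "y \<in> {0..c}"
    then show "dist (G x) (G y) \<le> C * dist x y"
      using incr[of x y] incr[of y x] by (cases "x \<le> y") (auto simp: dist_real_def)
  qed (use g[of 0] c in auto)
  show "mono_on {0..c} G" using incr by (auto intro: mono_onI)
qed

lemma superlevel_set_continuous_mono:
  fixes G :: "real \<Rightarrow> real"
  assumes cont: "continuous_on {a..b} G" and mono: "mono_on {a..b} G"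
    and "a \<le> b" "G a \<le> y" "y < G b"
  obtains z where "z \<in> {a..b}" "G z = y" "{x \<in> {a..b}. y < G x} = {z<..b}"
proof -
  define X where "X = {a..b} \<inter> G -` {..y}"
  have "closed X" unfolding X_def by (rule continuous_closed_preimage[OF cont]) auto
  moreover have "a \<in> X" "bdd_above X" using assms by (auto simp: X_def intro: bdd_aboveI[of _ b])
  ultimately have "Sup X \<in> X" by (intro closed_contains_Sup) auto
  define z where "z = Sup X"
  have upper: "x \<le> z" if "x \<in> X" for x unfolding z_def by (rule cSup_upper[OF that \<open>bdd_above X\<close>])
  have z: "z \<in> {a..b}" "G z \<le> y" using \<open>Sup X \<in> X\<close> by (auto simp: X_def z_def)
  have "G z = y"
  proof (rule ccontr)
    assume "G z \<noteq> y"
    moreover have "continuous_on {z..b} G" using z by (auto intro: continuous_on_subset[OF cont])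
    ultimately obtain w where "z \<le> w" "w \<le> b" "G w = y" using IVT'[of G z y b] z assms by auto
    with z have "w = z" using upper[of w] by (auto simp: X_def)
    then show False using \<open>G w = y\<close> \<open>G z \<noteq> y\<close> by simp
  qed
  moreover have "{x \<in> {a..b}. y < G x} = {z<..b}"
  proof (intro set_eqI iffI)
    fix x assume "x \<in> {x \<in> {a..b}. y < G x}"
    then show "x \<in> {z<..b}" using mono_onD[OF mono, of x z] z \<open>G z = y\<close> by force
  next
    fix x assume "x \<in> {z<..b}"
    then show "x \<in> {x \<in> {a..b}. y < G x}" using z upper[of x] by (force simp: X_def)
  qed
  ultimately show thesis using z by (intro that) auto
qed

lemma set_integral_primitive_superlevel:
  fixes g :: "real \<Rightarrow> real"
  assumes [measurable]: "g \<in> borel_measurable borel" and c: "0 \<le> c"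
    and g: "\<And>x. x \<in> {0..c} \<Longrightarrow> 0 \<le> g x \<and> g x \<le> C"
  defines "G \<equiv> \<lambda>x. LINT t:{0..x}|lborel. g t"
  shows "ennreal (LINT x:{x. y < G x} \<inter> {0..c}|lborel. g x) = emeasure lborel ({0..G c} \<inter> {y<..})"
proof -
  have lip: "C-lipschitz_on {0..c} G" and mono: "mono_on {0..c} G"
    unfolding G_def using primitive_lipschitz_mono[OF assms(1) c g] by auto
  have G0: "G 0 = 0" by (simp add: G_def set_integral_lborel_singleton)
  have G_range: "0 \<le> G x \<and> G x \<le> G c" if "x \<in> {0..c}" for x
  proof -
    have "G 0 \<le> G x" "G x \<le> G c" using that c by (auto intro!: mono_onD[OF mono])
    then show ?thesis using G0 by linarith
  qed
  consider "y < 0" | "G c \<le> y" | "0 \<le> y" "y < G c" by linarith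
  then show ?thesis
  proof cases
    case 1
    then have "y < G x" if "x \<in> {0..c}" for x using G_range[OF that] by linarith
    then have "{x. y < G x} \<inter> {0..c} = {0..c}" "{0..G c} \<inter> {y<..} = {0..G c}" using 1 by auto
    then show ?thesis using G_range[of c] c by (simp add: G_def)
  next
    case 2
    then have "\<not> y < G x" if "x \<in> {0..c}" for x using G_range[OF that] by linarith
    then have "{x. y < G x} \<inter> {0..c} = {}" "{0..G c} \<inter> {y<..} = {}" using 2 by auto
    then show ?thesis by (simp add: set_lebesgue_integral_def)
  next
    case 3
    then have "G 0 \<le> y" using G0 by simp
    with superlevel_set_continuous_mono[OF lipschitz_on_continuous_on[OF lip] mono c _ 3(2)]
    obtain z where z: "z \<in> {0..c}" "G z = y" "{x \<in> {0..c}. y < G x} = {z<..c}"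
      by blast
    have "0 \<le> z" "z \<le> c" "c \<le> c" using z(1) by auto
    from primitive_increment(1)[OF assms(1) g this]
    have "(LINT x:{z<..c}|lborel. g x) = G c - y" using z(2) by (simp add: G_def)
    moreover have "{x. y < G x} \<inter> {0..c} = {z<..c}" using z(3) by blast
    moreover have "{0..G c} \<inter> {y<..} = {y<..G c}" using 3 by auto
    ultimately show ?thesis using 3 by simp
  qed
qed

lemma distr_primitive_density:
  fixes g :: "real \<Rightarrow> real"
  assumes [measurable]: "g \<in> borel_measurable borel" and c: "0 \<le> c"
    and g: "\<And>x. x \<in> {0..c} \<Longrightarrow> 0 \<le> g x \<and> g x \<le> C"
  defines "G \<equiv> \<lambda>x. LINT t:{0..x}|lborel. g t"
  shows "distr (density lborel (\<lambda>x. indicator {0..c} x * ennreal (g x))) borel G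
    = density lborel (indicator {0..G c})"
    (is "distr ?\<nu> _ _ = _")
proof (rule measure_eqI_lessThan)
  have [measurable]: "G \<in> borel_measurable borel"
    unfolding G_def by (rule borel_measurable_primitive) simp
  fix y :: real
  have "emeasure ?\<nu> {x. y < G x} = (\<integral>\<^sup>+x. indicator {0..c} x * ennreal (g x) * indicator {x. y < G x} x \<partial>lborel)"
    by (rule emeasure_density) auto
  also have "\<dots> = (\<integral>\<^sup>+x. indicator ({x. y < G x} \<inter> {0..c}) x * ennreal (g x) \<partial>lborel)"
    by (intro nn_integral_cong) (simp split: split_indicator)
  also have "\<dots> = ennreal (LINT x:{x. y < G x} \<inter> {0..c}|lborel. g x)"
    by (rule nn_integral_indicator_eq_set_integral[where a = 0 and b = c and C = C]) (use g in auto)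
  finally have superlevel: "emeasure ?\<nu> {x. y < G x} = ennreal (LINT x:{x. y < G x} \<inter> {0..c}|lborel. g x)" .
  have distr_eq: "emeasure (distr ?\<nu> borel G) {y<..} = emeasure ?\<nu> {x. y < G x}"
    by (subst emeasure_distr) (auto simp: vimage_def)
  also have "\<dots> = ennreal (LINT x:{x. y < G x} \<inter> {0..c}|lborel. g x)"
    by (rule superlevel)
  also have "\<dots> = emeasure lborel ({0..G c} \<inter> {y<..})"
    unfolding G_def by (rule set_integral_primitive_superlevel[OF assms(1) c g])
  also have "\<dots> = emeasure (density lborel (indicator {0..G c})) {y<..}"
    by (rule emeasure_density_indicator[symmetric]) auto
  finally show "emeasure (distr ?\<nu> borel G) {y<..} = emeasure (density lborel (indicator {0..G c})) {y<..}" .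
  show "emeasure (distr ?\<nu> borel G) {y<..} < \<infinity>"
    unfolding distr_eq superlevel by simp
qed auto

lemma nn_integral_exp_neg_primitive:
  fixes g :: "real \<Rightarrow> real"
  assumes [measurable]: "g \<in> borel_measurable borel" and c: "0 \<le> c"
    and g: "\<And>x. x \<in> {0..c} \<Longrightarrow> 0 \<le> g x \<and> g x \<le> C"
  defines "G \<equiv> \<lambda>x. LINT t:{0..x}|lborel. g t"
  shows "(\<integral>\<^sup>+x. indicator {0..c} x * ennreal (g x * exp (- G x)) \<partial>lborel) = ennreal (1 - exp (- G c))"
proof -
  have mono: "mono_on {0..c} G"
    unfolding G_def using primitive_lipschitz_mono[OF assms(1) c g] by auto
  have G0: "G 0 = 0" by (simp add: G_def set_integral_lborel_singleton)
  have [measurable]: "G \<in> borel_measurable borel"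
    unfolding G_def by (rule borel_measurable_primitive) simp
  have "(\<integral>\<^sup>+x. indicator {0..c} x * ennreal (g x * exp (- G x)) \<partial>lborel)
      = (\<integral>\<^sup>+x. indicator {0..c} x * ennreal (g x) * ennreal (exp (- G x)) \<partial>lborel)"
    using g by (intro nn_integral_cong) (auto simp: ennreal_mult split: split_indicator)
  also have "\<dots> = (\<integral>\<^sup>+x. ennreal (exp (- G x)) \<partial>density lborel (\<lambda>x. indicator {0..c} x * ennreal (g x)))"
    by (subst nn_integral_density) auto
  also have "\<dots> = (\<integral>\<^sup>+y. ennreal (exp (- y)) \<partial>distr (density lborel (\<lambda>x. indicator {0..c} x * ennreal (g x))) borel G)"
    by (subst nn_integral_distr) auto
  also have "\<dots> = (\<integral>\<^sup>+y. ennreal (exp (- y)) \<partial>density lborel (indicator {0..G c}))"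
    unfolding G_def by (subst distr_primitive_density[OF assms(1) c g]) auto
  also have "\<dots> = (\<integral>\<^sup>+y\<in>{0..G c}. ennreal (exp (- y)) \<partial>lborel)"
    by (subst nn_integral_density) (auto simp: mult.commute)
  also have "\<dots> = ennreal (- exp (- G c) - (- exp (- 0)))"
    using mono_onD[OF mono, of 0 c] G0 c
    by (intro nn_integral_FTC_Icc) (auto intro!: derivative_eq_intros)
  finally show ?thesis by simp
qed

lemma measure_eqI_Icc_nonneg:
  fixes N1 N2 :: "real measure"
  assumes sets: "sets N1 = sets borel" "sets N2 = sets borel" and s: "0 \<le> s"
    and supp: "\<And>A. A \<in> sets borel \<Longrightarrow> emeasure N1 A = emeasure N1 (A \<inter> {0..s})"
      "\<And>A. A \<in> sets borel \<Longrightarrow> emeasure N2 A = emeasure N2 (A \<inter> {0..s})"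
    and fin: "emeasure N1 {0..s} < \<infinity>"
    and eq: "\<And>c. 0 \<le> c \<Longrightarrow> c \<le> s \<Longrightarrow> emeasure N1 {0..c} = emeasure N2 {0..c}"
  shows "N1 = N2"
proof (rule measure_eqI_lessThan[OF sets])
  fix c :: real
  have "emeasure N1 {c<..} = emeasure N1 ({c<..} \<inter> {0..s})" by (rule supp) simp
  also have "\<dots> \<le> emeasure N1 {0..s}" by (rule emeasure_mono) (auto simp: sets)
  finally show "emeasure N1 {c<..} < \<infinity>" using fin by (simp add: le_less_trans)
  consider "c < 0" | "s \<le> c" | "0 \<le> c" "c < s" by linarith
  then have "emeasure N1 ({c<..} \<inter> {0..s}) = emeasure N2 ({c<..} \<inter> {0..s})"
  proof cases
    case 1
    then have "{c<..} \<inter> {0..s} = {0..s}" by auto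
    then show ?thesis using eq[of s] s by simp
  next
    case 3
    then have e: "{c<..} \<inter> {0..s} = {0..s} - {0..c}" by auto
    have fin_c: "emeasure N1 {0..c} \<noteq> \<infinity>" "emeasure N2 {0..c} \<noteq> \<infinity>"
      using emeasure_mono[of "{0..c}" "{0..s}" N1] eq[of c] 3 fin sets by (auto simp: top_unique)
    show ?thesis unfolding e using 3 fin_c sets eq[of c] eq[of s] s by (subst (1 2) emeasure_Diff) auto
  next
    case 2
    then have "{c<..} \<inter> {0..s} = {}" by auto
    then show ?thesis by simp
  qed
  then show "emeasure N1 {c<..} = emeasure N2 {c<..}" using supp[of "{c<..}"] by simp
qed

lemma measure_eq_set_integral_of_emeasure:
  fixes F :: "real \<Rightarrow> real"
  assumes "emeasure M E = (\<integral>\<^sup>+r. indicator A r * ennreal (F r) \<partial>lborel)"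
    and [measurable]: "A \<in> sets borel" "F \<in> borel_measurable borel" and "\<And>r. r \<in> A \<Longrightarrow> 0 \<le> F r"
  shows "measure M E = (LINT r:A|lborel. F r)"
proof -
  have "(LINT r:A|lborel. F r) = enn2real (\<integral>\<^sup>+r. ennreal (indicator A r *\<^sub>R F r) \<partial>lborel)"
    unfolding set_lebesgue_integral_def using assms(4)
    by (intro integral_eq_nn_integral) (auto split: split_indicator)
  also have "(\<integral>\<^sup>+r. ennreal (indicator A r *\<^sub>R F r) \<partial>lborel) = (\<integral>\<^sup>+r. indicator A r * ennreal (F r) \<partial>lborel)"
    by (intro nn_integral_cong) (auto split: split_indicator)
  finally show ?thesis using assms(1) by (simp add: measure_def)
qed

lemma nn_integral_substitution_hypot:
  fixes F :: "real \<Rightarrow> real"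
  assumes h: "0 < h" and s: "0 \<le> s"
    and F: "set_borel_measurable borel {h..sqrt (s\<^sup>2 + h\<^sup>2)} F"
  shows "(\<integral>\<^sup>+x. indicator {0..s} x * ennreal (F (sqrt (x\<^sup>2 + h\<^sup>2)) * (x / sqrt (x\<^sup>2 + h\<^sup>2))) \<partial>lborel)
    = (\<integral>\<^sup>+r. indicator {h..sqrt (s\<^sup>2 + h\<^sup>2)} r * ennreal (F r) \<partial>lborel)"
proof -
  let ?\<phi> = "\<lambda>x :: real. sqrt (x\<^sup>2 + h\<^sup>2)"
  have pos: "0 < x\<^sup>2 + h\<^sup>2" for x :: real using h by (simp add: add_nonneg_pos)
  have "(\<integral>\<^sup>+r. indicator {h..?\<phi> s} r * ennreal (F r) \<partial>lborel)
      = (\<integral>\<^sup>+r. F r * indicator {?\<phi> 0..?\<phi> s} r \<partial>lborel)"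
    using h by (intro nn_integral_cong) (simp split: split_indicator)
  also have "\<dots> = (\<integral>\<^sup>+x. F (?\<phi> x) * (x / ?\<phi> x) * indicator {0..s} x \<partial>lborel)"
  proof (rule nn_integral_substitution)
    show "(?\<phi> has_real_derivative x / ?\<phi> x) (at x)" for x
      using pos[of x] by (auto intro!: derivative_eq_intros simp: field_simps)
    show "continuous_on {0..s} (\<lambda>x. x / ?\<phi> x)"
      using pos by (intro continuous_intros) (auto simp: less_imp_neq[symmetric])
  qed (use F h s in auto)
  also have "\<dots> = (\<integral>\<^sup>+x. indicator {0..s} x * ennreal (F (?\<phi> x) * (x / ?\<phi> x)) \<partial>lborel)"
    by (intro nn_integral_cong) (simp split: split_indicator)
  finally show ?thesis ..
qed

context prob_space
begin

lemma density_distr_Icc_eqI: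
  fixes Y :: "'a \<Rightarrow> real" and f :: "real \<Rightarrow> ennreal"
  assumes [measurable]: "Y \<in> borel_measurable M" "f \<in> borel_measurable borel" and s: "0 \<le> s"
    and eq: "\<And>c. 0 \<le> c \<Longrightarrow> c \<le> s \<Longrightarrow>
      emeasure M {\<omega> \<in> space M. Y \<omega> \<in> {0..c}} = (\<integral>\<^sup>+x. indicator {0..c} x * f x \<partial>lborel)"
  shows "density (distr M borel Y) (indicator {0..s}) = density lborel (\<lambda>x. indicator {0..s} x * f x)"
    (is "?N1 = ?N2")
proof (rule measure_eqI_Icc_nonneg[OF _ _ s])
  have N1: "emeasure ?N1 A = emeasure M {\<omega> \<in> space M. Y \<omega> \<in> {0..s} \<inter> A}"
    if [measurable]: "A \<in> sets borel" for A
  proof -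
    have "emeasure ?N1 A = emeasure (distr M borel Y) ({0..s} \<inter> A)"
      by (rule emeasure_density_indicator) auto
    also have "\<dots> = emeasure M {\<omega> \<in> space M. Y \<omega> \<in> {0..s} \<inter> A}"
      by (subst emeasure_distr) (auto simp: vimage_def Int_def conj_commute)
    finally show ?thesis .
  qed
  have N2: "emeasure ?N2 A = (\<integral>\<^sup>+x. indicator ({0..s} \<inter> A) x * f x \<partial>lborel)"
    if [measurable]: "A \<in> sets borel" for A
  proof -
    have "emeasure ?N2 A = (\<integral>\<^sup>+x. indicator {0..s} x * f x * indicator A x \<partial>lborel)"
      by (rule emeasure_density) auto
    also have "\<dots> = (\<integral>\<^sup>+x. indicator ({0..s} \<inter> A) x * f x \<partial>lborel)"
      by (intro nn_integral_cong) (auto split: split_indicator)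
    finally show ?thesis .
  qed
  show "emeasure ?N1 A = emeasure ?N1 (A \<inter> {0..s})" "emeasure ?N2 A = emeasure ?N2 (A \<inter> {0..s})"
    if "A \<in> sets borel" for A
  proof -
    have "{0..s} \<inter> (A \<inter> {0..s}) = {0..s} \<inter> A" by auto
    moreover have "A \<inter> {0..s} \<in> sets borel" using that by auto
    ultimately show "emeasure ?N1 A = emeasure ?N1 (A \<inter> {0..s})" "emeasure ?N2 A = emeasure ?N2 (A \<inter> {0..s})"
      using that by (simp_all only: N1 N2 Int_assoc Int_absorb)
  qed
  show "emeasure ?N1 {0..s} < \<infinity>" by (simp add: N1 emeasure_eq_measure)
  fix c assume "0 \<le> c" "c \<le> s"
  then show "emeasure ?N1 {0..c} = emeasure ?N2 {0..c}"
    using eq N2[of "{0..c}"] by (simp add: N1 Int_absorb1)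
qed auto

lemma ppp_radial_nearest_dist_density:
  fixes q :: "real \<Rightarrow> real"
  assumes ppp: "ppp M \<Phi> (\<lambda>p. q (norm p))" and q_meas[measurable]: "q \<in> borel_measurable borel"
    and q: "\<And>x. 0 \<le> x \<Longrightarrow> 0 \<le> q x \<and> q x \<le> Q" and s: "0 \<le> s"
  shows "density (distr M borel (\<lambda>\<omega>. nearest_dist (\<Phi> \<omega>))) (indicator {0..s})
    = density lborel (\<lambda>x. indicator {0..s} x
        * ennreal (2 * pi * x * q x * exp (- 2 * pi * (LINT y:{0..x}|lborel. y * q y))))"
proof (rule density_distr_Icc_eqI[OF ppp_nearest_dist_borel_measurable[OF ppp] _ s])
  have "(\<lambda>x. LINT y:{0..x}|lborel. y * q y) \<in> borel_measurable borel"
    by (rule borel_measurable_primitive) simp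
  then show "(\<lambda>x. ennreal (2 * pi * x * q x * exp (- 2 * pi * (LINT y:{0..x}|lborel. y * q y))))
      \<in> borel_measurable borel"
    by measurable
  define g where "g x = 2 * pi * (x * q x)" for x
  have [measurable]: "g \<in> borel_measurable borel" unfolding g_def by measurable
  have G: "(LINT y:{0..x}|lborel. g y) = 2 * pi * (LINT y:{0..x}|lborel. y * q y)" for x
    unfolding g_def by (rule set_integral_mult_right)
  fix c assume c: "0 \<le> c" "c \<le> s"
  have "emeasure M {\<omega> \<in> space M. nearest_dist (\<Phi> \<omega>) \<in> {0..c}} = ennreal (1 - exp (- (LINT y:{0..c}|lborel. g y)))"
    using ppp_radial_nearest_dist_Icc[OF ppp q_meas order_refl c(1)]
    by (simp add: G set_integral_lborel_singleton emeasure_eq_measure)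
  also have "\<dots> = (\<integral>\<^sup>+x. indicator {0..c} x * ennreal (g x * exp (- (LINT y:{0..x}|lborel. g y))) \<partial>lborel)"
    using q c mult_mono[of _ s _ Q]
    by (intro nn_integral_exp_neg_primitive[where C = "2 * pi * s * Q", symmetric]) (auto simp: g_def)
  also have "\<dots> = (\<integral>\<^sup>+x. indicator {0..c} x
      * ennreal (2 * pi * x * q x * exp (- 2 * pi * (LINT y:{0..x}|lborel. y * q y))) \<partial>lborel)"
    by (simp add: G g_def mult.assoc)
  finally show "emeasure M {\<omega> \<in> space M. nearest_dist (\<Phi> \<omega>) \<in> {0..c}} = (\<integral>\<^sup>+x. indicator {0..c} x
      * ennreal (2 * pi * x * q x * exp (- 2 * pi * (LINT y:{0..x}|lborel. y * q y))) \<partial>lborel)" .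
qed

text \<open>\<open>indep_var\<close> relates two random variables with values in the same space, so \<open>X 1\<close> is
  paired with a dummy coordinate to match the pair \<open>(X 0, X 2)\<close>.\<close>

lemma distr_indep_vars_single_pair:
  fixes X :: "nat \<Rightarrow> 'a \<Rightarrow> real"
  assumes indep: "indep_vars (\<lambda>_. borel) X {0, 1, 2}"
  shows "distr M ((borel \<Otimes>\<^sub>M borel) \<Otimes>\<^sub>M (borel \<Otimes>\<^sub>M borel)) (\<lambda>\<omega>. ((X 1 \<omega>, 0 :: real), (X 0 \<omega>, X 2 \<omega>)))
    = distr M (borel \<Otimes>\<^sub>M borel) (\<lambda>\<omega>. (X 1 \<omega>, 0 :: real)) \<Otimes>\<^sub>M (distr M borel (X 0) \<Otimes>\<^sub>M distr M borel (X 2))"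
proof -
  have "indep_var (PiM {1} (\<lambda>_. borel)) (\<lambda>\<omega>. \<lambda>i\<in>{1}. X i \<omega>) (PiM {0, 2} (\<lambda>_. borel)) (\<lambda>\<omega>. \<lambda>i\<in>{0, 2}. X i \<omega>)"
    by (rule indep_var_restrict[OF indep]) auto
  then have "indep_var (borel \<Otimes>\<^sub>M borel) ((\<lambda>f. (f 1, 0 :: real)) \<circ> (\<lambda>\<omega>. \<lambda>i\<in>{1}. X i \<omega>))
      (borel \<Otimes>\<^sub>M borel) ((\<lambda>f. (f 0, f 2)) \<circ> (\<lambda>\<omega>. \<lambda>i\<in>{0, 2}. X i \<omega>))"
    by (rule indep_var_compose) measurable
  then have "indep_var (borel \<Otimes>\<^sub>M borel) (\<lambda>\<omega>. (X 1 \<omega>, 0 :: real)) (borel \<Otimes>\<^sub>M borel) (\<lambda>\<omega>. (X 0 \<omega>, X 2 \<omega>))"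
    by (simp add: comp_def)
  moreover have "indep_var (PiM {0} (\<lambda>_. borel)) (\<lambda>\<omega>. \<lambda>i\<in>{0}. X i \<omega>) (PiM {2} (\<lambda>_. borel)) (\<lambda>\<omega>. \<lambda>i\<in>{2}. X i \<omega>)"
    by (rule indep_var_restrict[OF indep]) auto
  then have "indep_var borel ((\<lambda>f. f 0) \<circ> (\<lambda>\<omega>. \<lambda>i\<in>{0}. X i \<omega>)) borel ((\<lambda>f. f 2) \<circ> (\<lambda>\<omega>. \<lambda>i\<in>{2}. X i \<omega>))"
    by (rule indep_var_compose) measurable
  then have "indep_var borel (X 0) borel (X 2)" by (simp add: comp_def)
  ultimately show ?thesis by (simp add: indep_var_distribution_eq)
qed

lemma emeasure_indep_vars_sections:
  fixes X :: "nat \<Rightarrow> 'a \<Rightarrow> real"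
  assumes indep: "indep_vars (\<lambda>_. borel) X {0, 1, 2}" and S: "S \<in> sets (borel \<Otimes>\<^sub>M borel \<Otimes>\<^sub>M borel)"
  shows "emeasure M {\<omega> \<in> space M. (X 1 \<omega>, X 0 \<omega>, X 2 \<omega>) \<in> S}
    = (\<integral>\<^sup>+x. emeasure (distr M borel (X 0) \<Otimes>\<^sub>M distr M borel (X 2)) (Pair x -` S) \<partial>distr M borel (X 1))"
proof -
  have [measurable]: "X i \<in> borel_measurable M" if "i \<in> {0, 1, 2}" for i
    using indep that unfolding indep_vars_def by auto
  let ?m02 = "distr M borel (X 0) \<Otimes>\<^sub>M distr M borel (X 2)"
  let ?m1 = "distr M (borel \<Otimes>\<^sub>M borel) (\<lambda>\<omega>. (X 1 \<omega>, 0 :: real))"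
  let ?Y = "\<lambda>\<omega>. ((X 1 \<omega>, 0 :: real), (X 0 \<omega>, X 2 \<omega>))"
  let ?S' = "{(u :: real \<times> real, v). (fst u, v) \<in> S}"
  have sf: "sigma_finite_measure ?m02"
    by (auto intro!: prob_space_imp_sigma_finite prob_space_pair prob_space_distr)
  have m: "(\<lambda>(u :: real \<times> real, v :: real \<times> real). (fst u, v))
      \<in> (borel \<Otimes>\<^sub>M borel) \<Otimes>\<^sub>M (borel \<Otimes>\<^sub>M borel) \<rightarrow>\<^sub>M borel \<Otimes>\<^sub>M (borel \<Otimes>\<^sub>M borel)"
    by measurable
  have S': "?S' \<in> sets ((borel \<Otimes>\<^sub>M borel) \<Otimes>\<^sub>M (borel \<Otimes>\<^sub>M borel))"
    using measurable_sets[OF m S] by (simp add: vimage_def space_pair_measure case_prod_beta')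
  have Y: "?Y \<in> M \<rightarrow>\<^sub>M (borel \<Otimes>\<^sub>M borel) \<Otimes>\<^sub>M (borel \<Otimes>\<^sub>M borel)" by measurable
  have "emeasure M {\<omega> \<in> space M. (X 1 \<omega>, X 0 \<omega>, X 2 \<omega>) \<in> S}
      = emeasure (distr M ((borel \<Otimes>\<^sub>M borel) \<Otimes>\<^sub>M (borel \<Otimes>\<^sub>M borel)) ?Y) ?S'"
    using emeasure_distr[OF Y S'] by (simp add: vimage_def Int_def conj_commute)
  also have "\<dots> = (\<integral>\<^sup>+u. emeasure ?m02 (Pair u -` ?S') \<partial>?m1)"
    unfolding distr_indep_vars_single_pair[OF indep]
    using S' by (intro sigma_finite_measure.emeasure_pair_measure_alt[OF sf]) simp
  also have "\<dots> = (\<integral>\<^sup>+\<omega>. emeasure ?m02 (Pair (X 1 \<omega>, 0) -` ?S') \<partial>M)"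
  proof (rule nn_integral_distr)
    show "(\<lambda>u. emeasure ?m02 (Pair u -` ?S')) \<in> borel_measurable ?m1"
      unfolding measurable_distr_eq1
      using sigma_finite_measure.measurable_emeasure_Pair[OF sf, of ?S' "borel \<Otimes>\<^sub>M borel"] S'
      by (simp cong: sets_pair_measure_cong)
  qed simp
  also have "\<dots> = (\<integral>\<^sup>+\<omega>. emeasure ?m02 (Pair (X 1 \<omega>) -` S) \<partial>M)"
    by (intro nn_integral_cong arg_cong[where f = "emeasure ?m02"]) auto
  also have "\<dots> = (\<integral>\<^sup>+x. emeasure ?m02 (Pair x -` S) \<partial>distr M borel (X 1))"
  proof (rule nn_integral_distr[symmetric])
    show "(\<lambda>x. emeasure ?m02 (Pair x -` S)) \<in> borel_measurable (distr M borel (X 1))"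
      unfolding measurable_distr_eq1
      using sigma_finite_measure.measurable_emeasure_Pair[OF sf, of S borel] S
      by (simp cong: sets_pair_measure_cong)
  qed simp
  finally show ?thesis .
qed

lemma emeasure_indep_vars_conditional:
  fixes X :: "nat \<Rightarrow> 'a \<Rightarrow> real"
  assumes indep: "indep_vars (\<lambda>_. borel) X {0, 1, 2}"
    and S: "{(x, y, z). x \<in> P \<and> y \<in> T x \<and> z \<in> U x} \<in> sets (borel \<Otimes>\<^sub>M borel \<Otimes>\<^sub>M borel)"
    and [measurable]: "P \<in> sets borel" "\<And>x. T x \<in> sets borel" "\<And>x. U x \<in> sets borel"
  shows "emeasure M {\<omega> \<in> space M. X 1 \<omega> \<in> P \<and> X 0 \<omega> \<in> T (X 1 \<omega>) \<and> X 2 \<omega> \<in> U (X 1 \<omega>)}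
    = (\<integral>\<^sup>+x. indicator P x * emeasure M {\<omega> \<in> space M. X 0 \<omega> \<in> T x}
        * emeasure M {\<omega> \<in> space M. X 2 \<omega> \<in> U x} \<partial>distr M borel (X 1))"
proof -
  have [measurable]: "X i \<in> borel_measurable M" if "i \<in> {0, 1, 2}" for i
    using indep that unfolding indep_vars_def by auto
  have "sigma_finite_measure (distr M borel (X 2))"
    by (auto intro!: prob_space_imp_sigma_finite prob_space_distr)
  have "emeasure (distr M borel (X 0) \<Otimes>\<^sub>M distr M borel (X 2)) (Pair x -` {(x, y, z). x \<in> P \<and> y \<in> T x \<and> z \<in> U x})
      = indicator P x * emeasure M {\<omega> \<in> space M. X 0 \<omega> \<in> T x} * emeasure M {\<omega> \<in> space M. X 2 \<omega> \<in> U x}" for x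
  proof (cases "x \<in> P")
    case True
    then have "Pair x -` {(x, y, z). x \<in> P \<and> y \<in> T x \<and> z \<in> U x} = T x \<times> U x" by auto
    then show ?thesis
      using True by (simp add: sigma_finite_measure.emeasure_pair_measure_Times[OF \<open>sigma_finite_measure (distr M borel (X 2))\<close>]
          emeasure_distr vimage_def Int_def conj_commute)
  qed simp
  then show ?thesis using emeasure_indep_vars_sections[OF indep S] by simp
qed

end

section \<open>The association rule\<close>

lemma powr_le_powr_base_iff:
  "0 < e \<Longrightarrow> 0 \<le> u \<Longrightarrow> 0 \<le> v \<Longrightarrow> u powr e \<le> v powr e \<longleftrightarrow> u \<le> (v :: real)"
  by (meson not_le powr_less_mono2 powr_mono2 less_imp_le)

lemma power_law_le_iff:
  fixes a b x y \<alpha> \<beta> :: real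
  assumes "0 < a" "0 < b" "0 < x" "0 < y" "0 < \<alpha>" "0 < \<beta>"
  shows "a * y powr (- \<beta>) \<le> b * x powr (- \<alpha>) \<longleftrightarrow> (a / b) powr (1 / \<beta>) * x powr (\<alpha> / \<beta>) \<le> y"
proof -
  have "a * y powr (- \<beta>) \<le> b * x powr (- \<alpha>) \<longleftrightarrow> a / y powr \<beta> \<le> b / x powr \<alpha>"
    using assms by (simp add: powr_minus divide_inverse)
  also have "\<dots> \<longleftrightarrow> (a / b) * x powr \<alpha> \<le> y powr \<beta>"
    using assms by (simp add: field_simps)
  also have "\<dots> \<longleftrightarrow> ((a / b) * x powr \<alpha>) powr (1 / \<beta>) \<le> (y powr \<beta>) powr (1 / \<beta>)"
    using assms by (intro powr_le_powr_base_iff[symmetric]) auto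
  also have "((a / b) * x powr \<alpha>) powr (1 / \<beta>) = (a / b) powr (1 / \<beta>) * (x powr \<alpha>) powr (1 / \<beta>)"
    using assms by (intro powr_mult)
  also have "(x powr \<alpha>) powr (1 / \<beta>) = x powr (\<alpha> / \<beta>)" by (simp add: powr_powr)
  also have "(y powr \<beta>) powr (1 / \<beta>) = y" using assms by (simp add: powr_powr)
  finally show ?thesis .
qed

lemma scaled_powr_le_iff:
  fixes K r B \<gamma> :: real
  assumes "0 < K" "0 < r" "0 < B" "0 < \<gamma>"
  shows "K * r powr \<gamma> \<le> B \<longleftrightarrow> r \<le> (B / K) powr (1 / \<gamma>)"
proof -
  have "K * r powr \<gamma> \<le> B \<longleftrightarrow> r powr \<gamma> \<le> B / K" using assms by (simp add: field_simps)
  also have "\<dots> \<longleftrightarrow> (r powr \<gamma>) powr (1 / \<gamma>) \<le> (B / K) powr (1 / \<gamma>)"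
    using assms by (intro powr_le_powr_base_iff[symmetric]) auto
  also have "(r powr \<gamma>) powr (1 / \<gamma>) = r" using assms by (simp add: powr_powr)
  finally show ?thesis .
qed

lemma power_law_threshold_eq:
  fixes a b B \<alpha> \<beta> :: real
  assumes "0 < a" "0 < b" "0 < B" "0 < \<alpha>" "0 < \<beta>"
  shows "(B / (a / b) powr (1 / \<beta>)) powr (1 / (\<alpha> / \<beta>)) = (b / a) powr (1 / \<alpha>) * B powr (\<beta> / \<alpha>)"
proof -
  have "(B / (a / b) powr (1 / \<beta>)) powr (1 / (\<alpha> / \<beta>)) = B powr (\<beta> / \<alpha>) / ((a / b) powr (1 / \<beta>)) powr (\<beta> / \<alpha>)"
    using assms by (simp add: powr_divide powr_mult)
  also have "((a / b) powr (1 / \<beta>)) powr (\<beta> / \<alpha>) = (a / b) powr (1 / \<alpha>)"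
    using assms by (simp add: powr_powr)
  also have "(a / b) powr (1 / \<alpha>) = a powr (1 / \<alpha>) / b powr (1 / \<alpha>)"
    using assms by (simp add: powr_divide)
  also have "B powr (\<beta> / \<alpha>) / (a powr (1 / \<alpha>) / b powr (1 / \<alpha>)) = (b / a) powr (1 / \<alpha>) * B powr (\<beta> / \<alpha>)"
    using assms by (simp add: powr_divide field_simps)
  finally show ?thesis .
qed

lemma le_sqrt_iff_power2_le: "0 \<le> x \<Longrightarrow> 0 \<le> y \<Longrightarrow> x \<le> sqrt y \<longleftrightarrow> x\<^sup>2 \<le> (y :: real)"
  by (metis real_sqrt_abs abs_of_nonneg real_sqrt_le_iff)

lemma sqrt_le_iff_le_power2: "0 \<le> t \<Longrightarrow> sqrt y \<le> t \<longleftrightarrow> y \<le> (t :: real)\<^sup>2"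
  by (metis real_sqrt_abs abs_of_nonneg real_sqrt_le_iff)

lemma dist3_eq_nearest_dist: "S \<noteq> {} \<Longrightarrow> dist3 h S = sqrt ((nearest_dist S)\<^sup>2 + h\<^sup>2)"
  by (simp add: dist3_def nearest_dist_def)

lemma dist3_ge_height: "0 < h \<Longrightarrow> h \<le> dist3 h S"
  unfolding dist3_def using real_sqrt_le_mono[of "h\<^sup>2" "(nearest S)\<^sup>2 + h\<^sup>2"] by simp

lemma dist3_le_iff_nearest_dist:
  assumes "0 < h" "h \<le> t" "S \<noteq> {}"
  shows "dist3 h S \<le> t \<longleftrightarrow> nearest_dist S \<in> {0..sqrt (t\<^sup>2 - h\<^sup>2)}"
proof -
  have n0: "0 \<le> nearest_dist S" using assms(3) nearest_nonneg by (simp add: nearest_dist_def)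
  have "dist3 h S \<le> t \<longleftrightarrow> (nearest_dist S)\<^sup>2 + h\<^sup>2 \<le> t\<^sup>2"
    using assms by (simp add: dist3_eq_nearest_dist sqrt_le_iff_le_power2)
  also have "\<dots> \<longleftrightarrow> nearest_dist S \<le> sqrt (t\<^sup>2 - h\<^sup>2)"
    using n0 assms by (simp add: le_sqrt_iff_power2_le power_mono le_diff_eq)
  finally show ?thesis using n0 by simp
qed

text \<open>The derived quantities \<open>lLh\<close>, \<open>lLT\<close>, \<open>tauNL\<close>, \<open>tauTL\<close> (and \<open>QT\<close> below) are
  parameters pinned down by their defining equations rather than definitions, so that the
  theorem can instantiate the locales with its own local abbreviations.\<close>

locale association_rule =
  fixes h RB \<alpha>T \<alpha>L \<alpha>N \<eta>T \<eta>L \<eta>N lLh lLT :: real and tauNL tauTL :: "real \<Rightarrow> real"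
  assumes pos: "0 < h" "0 < RB" "0 < \<alpha>T" "0 < \<alpha>L" "0 < \<alpha>N" "0 < \<eta>T" "0 < \<eta>L" "0 < \<eta>N"
    and lLh_eq: "lLh = (\<eta>L / \<eta>N) powr (1 / \<alpha>L) * h powr (\<alpha>N / \<alpha>L)"
    and lLT_eq: "lLT = (\<eta>L / \<eta>T) powr (1 / \<alpha>L) * RB powr (\<alpha>T / \<alpha>L)"
    and tauNL_eq: "tauNL = (\<lambda>r. max h ((\<eta>N / \<eta>L) powr (1 / \<alpha>N) * r powr (\<alpha>L / \<alpha>N)))"
    and tauTL_eq: "tauTL = (\<lambda>r. (\<eta>T / \<eta>L) powr (1 / \<alpha>T) * r powr (\<alpha>L / \<alpha>T))"
begin

definition slant_dist :: "real \<Rightarrow> real" where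
  "slant_dist x = sqrt (x\<^sup>2 + h\<^sup>2)"

text \<open>An NLoS ABS beats a LoS ABS at distance \<open>r\<close> exactly when its horizontal distance is
  below this radius.\<close>

definition NLoS_free_radius :: "real \<Rightarrow> real" where
  "NLoS_free_radius r = sqrt ((tauNL r)\<^sup>2 - h\<^sup>2)"

lemma slant_dist_pos: "0 < slant_dist x"
  using pos(1) by (simp add: slant_dist_def add_nonneg_pos)

lemma height_le_slant_dist: "h \<le> slant_dist x"
  using pos(1) by (simp add: slant_dist_def real_le_rsqrt)

lemma height_le_tauNL: "h \<le> tauNL r"
  by (simp add: tauNL_eq)

lemma tauNL_eq_height:
  assumes "0 < r" "r \<le> lLh"
  shows "tauNL r = h"
proof -
  have "(\<eta>N / \<eta>L) powr (1 / \<alpha>N) * r powr (\<alpha>L / \<alpha>N) \<le> h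
      \<longleftrightarrow> r \<le> (h / (\<eta>N / \<eta>L) powr (1 / \<alpha>N)) powr (1 / (\<alpha>L / \<alpha>N))"
    using pos assms by (intro scaled_powr_le_iff) auto
  also have "(h / (\<eta>N / \<eta>L) powr (1 / \<alpha>N)) powr (1 / (\<alpha>L / \<alpha>N)) = lLh"
    unfolding lLh_eq using pos by (intro power_law_threshold_eq) auto
  finally show ?thesis using assms by (simp add: tauNL_eq)
qed

lemma tauTL_le_RB_iff: "0 < r \<Longrightarrow> tauTL r \<le> RB \<longleftrightarrow> r \<le> lLT"
proof -
  assume "0 < r"
  then have "tauTL r \<le> RB \<longleftrightarrow> r \<le> (RB / (\<eta>T / \<eta>L) powr (1 / \<alpha>T)) powr (1 / (\<alpha>L / \<alpha>T))"
    unfolding tauTL_eq using pos by (intro scaled_powr_le_iff) auto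
  also have "(RB / (\<eta>T / \<eta>L) powr (1 / \<alpha>T)) powr (1 / (\<alpha>L / \<alpha>T)) = lLT"
    unfolding lLT_eq using pos by (intro power_law_threshold_eq) auto
  finally show ?thesis .
qed

lemma NLoS_rx_le_iff:
  assumes d: "0 < d"
  shows "rx_A \<eta>N \<alpha>N h SN \<le> \<eta>L * d powr (- \<alpha>L) \<longleftrightarrow> nearest_dist SN \<notin> {0..<NLoS_free_radius d}"
proof (cases "SN = {}")
  case True
  then show ?thesis using pos d by (simp add: rx_A_def nearest_dist_def)
next
  case False
  let ?n = "nearest_dist SN" and ?D = "dist3 h SN"
  have n: "0 \<le> ?n" using False nearest_nonneg by (simp add: nearest_dist_def)
  have D: "?D = sqrt (?n\<^sup>2 + h\<^sup>2)" "h \<le> ?D" using False dist3_eq_nearest_dist dist3_ge_height pos(1) by auto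
  have "rx_A \<eta>N \<alpha>N h SN \<le> \<eta>L * d powr (- \<alpha>L)
      \<longleftrightarrow> (\<eta>N / \<eta>L) powr (1 / \<alpha>N) * d powr (\<alpha>L / \<alpha>N) \<le> ?D"
    using False power_law_le_iff[OF pos(8,7) d _ pos(4,5), of ?D] D(2) pos(1) by (simp add: rx_A_def)
  also have "\<dots> \<longleftrightarrow> tauNL d \<le> ?D" using D by (simp add: tauNL_eq)
  also have "\<dots> \<longleftrightarrow> (tauNL d)\<^sup>2 \<le> ?n\<^sup>2 + h\<^sup>2"
    unfolding D(1) using height_le_tauNL[of d] pos(1) by (intro le_sqrt_iff_power2_le) auto
  also have "\<dots> \<longleftrightarrow> NLoS_free_radius d \<le> ?n"
    unfolding NLoS_free_radius_def using n by (simp add: sqrt_le_iff_le_power2 diff_le_eq)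
  finally show ?thesis using n by auto
qed

lemma assoc_LoS_no_TBS_iff:
  assumes t: "h \<le> t"
  shows "(dist3 h SL \<le> t \<and> \<not> (ST \<noteq> {} \<and> nearest ST \<le> RB) \<and> assoc_LoS h RB \<alpha>T \<alpha>L \<alpha>N \<eta>T \<eta>L \<eta>N ST SL SN)
    \<longleftrightarrow> nearest_dist SL \<in> {0..sqrt (t\<^sup>2 - h\<^sup>2)} \<and> nearest_dist ST \<notin> {0..RB}
      \<and> nearest_dist SN \<notin> {0..<NLoS_free_radius (slant_dist (nearest_dist SL))}"
proof (cases "SL = {}")
  case True
  then show ?thesis by (simp add: assoc_LoS_def nearest_dist_def)
next
  case False
  let ?d = "slant_dist (nearest_dist SL)"
  have d: "dist3 h SL = ?d" using False by (simp add: dist3_eq_nearest_dist slant_dist_def)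
  have rx_L: "rx_A \<eta>L \<alpha>L h SL = \<eta>L * ?d powr (- \<alpha>L)" "0 < \<eta>L * ?d powr (- \<alpha>L)"
    using False d pos(7) slant_dist_pos[of "nearest_dist SL"] by (simp_all add: rx_A_def)
  have "\<not> (ST \<noteq> {} \<and> nearest ST \<le> RB) \<longleftrightarrow> nearest_dist ST \<notin> {0..RB}"
    using nearest_nonneg[of ST] by (auto simp: nearest_dist_def)
  moreover have "\<not> (ST \<noteq> {} \<and> nearest ST \<le> RB) \<Longrightarrow> rx_T \<eta>T \<alpha>T RB ST = 0"
    by (auto simp: rx_T_def)
  ultimately show ?thesis
    unfolding assoc_LoS_def rx_L(1) d[symmetric]
    using dist3_le_iff_nearest_dist[OF pos(1) t False] NLoS_rx_le_iff[OF slant_dist_pos] rx_L(2) False d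
    by auto
qed

text \<open>A TBS exactly at the UE has received power \<open>0\<close>, since \<open>0 powr - \<alpha>T = 0\<close>; this null
  event appears as the second alternative.\<close>

lemma TBS_rx_le_iff:
  assumes d: "0 < d"
  shows "(ST \<noteq> {} \<and> nearest ST \<le> RB \<and> rx_T \<eta>T \<alpha>T RB ST \<le> \<eta>L * d powr (- \<alpha>L))
    \<longleftrightarrow> nearest_dist ST \<in> {tauTL d..RB} \<or> nearest_dist ST = 0"
proof (cases "ST = {}")
  case True
  have "0 < tauTL d" unfolding tauTL_eq using pos(6,7) d by (intro mult_pos_pos) auto
  then show ?thesis using True by (simp add: nearest_dist_def)
next
  case ST: False
  show ?thesis
  proof (cases "nearest ST = 0")
    case True
    then show ?thesis using ST pos d by (simp add: nearest_dist_def rx_T_def)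
  next
    case False
    then have n: "0 < nearest ST" using nearest_nonneg[OF ST] by simp
    have "\<eta>T * nearest ST powr (- \<alpha>T) \<le> \<eta>L * d powr (- \<alpha>L) \<longleftrightarrow> tauTL d \<le> nearest ST"
      unfolding tauTL_eq using pos n d by (simp add: power_law_le_iff)
    then show ?thesis using ST n by (auto simp: nearest_dist_def rx_T_def)
  qed
qed

lemma assoc_LoS_TBS_iff:
  assumes t: "h \<le> t"
  shows "(dist3 h SL \<le> t \<and> (ST \<noteq> {} \<and> nearest ST \<le> RB) \<and> assoc_LoS h RB \<alpha>T \<alpha>L \<alpha>N \<eta>T \<eta>L \<eta>N ST SL SN)
    \<longleftrightarrow> nearest_dist SL \<in> {0..sqrt (t\<^sup>2 - h\<^sup>2)}
      \<and> (nearest_dist ST \<in> {tauTL (slant_dist (nearest_dist SL))..RB} \<or> nearest_dist ST = 0)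
      \<and> nearest_dist SN \<notin> {0..<NLoS_free_radius (slant_dist (nearest_dist SL))}"
proof (cases "SL = {}")
  case True
  then show ?thesis by (simp add: assoc_LoS_def nearest_dist_def)
next
  case False
  let ?d = "slant_dist (nearest_dist SL)"
  have d: "dist3 h SL = ?d" using False by (simp add: dist3_eq_nearest_dist slant_dist_def)
  have rx_L: "rx_A \<eta>L \<alpha>L h SL = \<eta>L * ?d powr (- \<alpha>L)" "0 < \<eta>L * ?d powr (- \<alpha>L)"
    using False d pos(7) slant_dist_pos[of "nearest_dist SL"] by (simp_all add: rx_A_def)
  show ?thesis
    unfolding assoc_LoS_def rx_L(1) d[symmetric]
    using dist3_le_iff_nearest_dist[OF pos(1) t False] NLoS_rx_le_iff[OF slant_dist_pos]
      TBS_rx_le_iff[OF slant_dist_pos] rx_L(2) False d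
    by auto
qed

lemma borel_measurable_tauNL [measurable]: "tauNL \<in> borel_measurable borel"
  unfolding tauNL_eq by measurable

lemma borel_measurable_tauTL [measurable]: "tauTL \<in> borel_measurable borel"
  unfolding tauTL_eq by measurable

lemma borel_measurable_NLoS_free_radius [measurable]: "NLoS_free_radius \<in> borel_measurable borel"
  unfolding NLoS_free_radius_def[abs_def] by measurable

lemma borel_measurable_slant_dist [measurable]: "slant_dist \<in> borel_measurable borel"
  unfolding slant_dist_def[abs_def] by measurable

end

section \<open>Association probabilities\<close>

lemma nn_integral_indicator_density_eq:
  assumes density: "density N (indicator A) = density lborel (\<lambda>x. indicator A x * ennreal (f x))"
    and [measurable]: "A \<in> sets borel" "sets N = sets borel" "H \<in> borel_measurable borel"
      "(\<lambda>x. indicator A x * ennreal (f x)) \<in> borel_measurable borel"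
  shows "(\<integral>\<^sup>+x. indicator A x * H x \<partial>N) = (\<integral>\<^sup>+x. indicator A x * ennreal (f x) * H x \<partial>lborel)"
proof -
  have N_meas: "measurable N borel = measurable borel borel"
    using measurable_cong_sets[OF assms(3) refl, of borel] .
  have "(\<integral>\<^sup>+x. indicator A x * H x \<partial>N) = (\<integral>\<^sup>+x. H x \<partial>density N (indicator A))"
    by (subst nn_integral_density) (auto simp: N_meas)
  also have "\<dots> = (\<integral>\<^sup>+x. indicator A x * ennreal (f x) * H x \<partial>lborel)"
    unfolding density by (subst nn_integral_density) auto
  finally show ?thesis .
qed

lemma set_integral_Icc_identity: "0 \<le> a \<Longrightarrow> (LINT x:{0..a}|lborel. x) = a\<^sup>2 / 2"
  for a :: real
  unfolding set_lebesgue_integral_def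
  by (subst integral_FTC_atLeastAtMost[where F = "\<lambda>x. x\<^sup>2 / 2"])
     (auto intro!: derivative_eq_intros continuous_intros
       simp: has_real_derivative_iff_has_vector_derivative[symmetric])

locale LoS_association = association_rule +
  fixes M :: "'a measure" and \<Phi>T \<Phi>L \<Phi>N :: "'a \<Rightarrow> (real \<times> real) set"
    and P_L :: "real \<Rightarrow> real" and lamT lamA QT :: real
  assumes prob_space: "prob_space M"
    and intensities: "0 < lamT" "0 < lamA"
    and PL_meas [measurable]: "P_L \<in> borel_measurable borel"
    and PL_range: "\<And>x. 0 \<le> x \<Longrightarrow> 0 \<le> P_L x \<and> P_L x \<le> 1"
    and T_ppp: "ppp M \<Phi>T (\<lambda>_. lamT)"
    and L_ppp: "ppp M \<Phi>L (\<lambda>p. lamA * P_L (norm p))"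
    and N_ppp: "ppp M \<Phi>N (\<lambda>p. lamA * (1 - P_L (norm p)))"
    and indep: "indep_pps M (\<lambda>i. if i = 0 then \<Phi>T else if i = 1 then \<Phi>L else \<Phi>N) {0, 1, 2}"
    and QT_eq: "QT = 1 - exp (- pi * lamT * RB\<^sup>2)"
begin

sublocale prob_space M by (rule prob_space)

definition NLoS_void :: "real \<Rightarrow> real" where
  "NLoS_void r = exp (- 2 * pi * lamA * (LINT x:{0..NLoS_free_radius r}|lborel. x * (1 - P_L x)))"

definition TBS_prob :: "real \<Rightarrow> real" where
  "TBS_prob r = (if tauTL r \<le> RB then exp (- pi * lamT * (tauTL r)\<^sup>2) - (1 - QT) else 0)"

lemma NLoS_void_eq:
  "0 < r \<Longrightarrow> NLoS_void r = (if r \<le> lLh then 1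
    else exp (- 2 * pi * lamA * (LINT x:{0..sqrt ((tauNL r)\<^sup>2 - h\<^sup>2)}|lborel. x * (1 - P_L x))))"
  by (simp add: NLoS_void_def NLoS_free_radius_def tauNL_eq_height set_integral_lborel_singleton)

lemma TBS_prob_eq: "0 < r \<Longrightarrow> TBS_prob r = (if r \<le> lLT then exp (- pi * lamT * (tauTL r)\<^sup>2) - (1 - QT) else 0)"
  by (simp add: TBS_prob_def tauTL_le_RB_iff)

lemma borel_measurable_NLoS_void [measurable]: "NLoS_void \<in> borel_measurable borel"
proof -
  have "(\<lambda>u. LINT x:{0..u}|lborel. x * (1 - P_L x)) \<in> borel_measurable borel"
    by (rule borel_measurable_primitive) simp
  then show ?thesis unfolding NLoS_void_def[abs_def] by measurable
qed

lemma borel_measurable_f_RL0 [measurable]: "f_RL0 lamA h P_L \<in> borel_measurable borel"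
proof -
  have "(\<lambda>u. LINT x:{0..u}|lborel. x * P_L x) \<in> borel_measurable borel"
    by (rule borel_measurable_primitive) simp
  then show ?thesis unfolding f_RL0_def[abs_def] by measurable
qed

lemma prob_NLoS_void:
  "prob {\<omega> \<in> space M. nearest_dist (\<Phi>N \<omega>) \<notin> {0..<NLoS_free_radius r}} = NLoS_void r"
proof -
  have "0 \<le> NLoS_free_radius r"
    using height_le_tauNL[of r] pos(1) by (simp add: NLoS_free_radius_def power_mono)
  moreover have "(LINT x:{0..a}|lborel. x * (lamA * (1 - P_L x))) = lamA * (LINT x:{0..a}|lborel. x * (1 - P_L x))" for a
    by (simp add: set_integral_mult_right[symmetric] ac_simps)
  ultimately show ?thesis
    using ppp_radial_nearest_dist_beyond(2)[of \<Phi>N "\<lambda>x. lamA * (1 - P_L x)"] N_ppp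
    by (simp add: NLoS_void_def mult.assoc)
qed

lemma f_RL0_nonneg: "h \<le> r \<Longrightarrow> 0 \<le> f_RL0 lamA h P_L r"
  unfolding f_RL0_def using pos(1) intensities PL_range[of "sqrt (r\<^sup>2 - h\<^sup>2)"]
  by (intro mult_nonneg_nonneg) auto

lemma indep_vars_tier_nearest_dist:
  "indep_vars (\<lambda>_. borel) (\<lambda>(i :: nat) \<omega>. nearest_dist ((if i = 0 then \<Phi>T else if i = 1 then \<Phi>L else \<Phi>N) \<omega>))
    {0, 1, 2}"
  using T_ppp L_ppp N_ppp indep by (intro indep_vars_nearest_dist) auto

lemma density_nearest_LoS_dist:
  assumes s: "0 \<le> s"
  shows "density (distr M borel (\<lambda>\<omega>. nearest_dist (\<Phi>L \<omega>))) (indicator {0..s})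
    = density lborel (\<lambda>x. indicator {0..s} x * ennreal (f_RL0 lamA h P_L (slant_dist x) * (x / slant_dist x)))"
proof -
  let ?g = "\<lambda>x. 2 * pi * x * (lamA * P_L x) * exp (- 2 * pi * (LINT y:{0..x}|lborel. y * (lamA * P_L y)))"
  have "density (distr M borel (\<lambda>\<omega>. nearest_dist (\<Phi>L \<omega>))) (indicator {0..s})
      = density lborel (\<lambda>x. indicator {0..s} x * ennreal (?g x))"
    using L_ppp intensities PL_range s by (intro ppp_radial_nearest_dist_density[where Q = lamA]) auto
  also have "(\<lambda>x. indicator {0..s} x * ennreal (?g x))
      = (\<lambda>x. indicator {0..s} x * ennreal (f_RL0 lamA h P_L (slant_dist x) * (x / slant_dist x)))"
  proof (rule ext)
    fix x
    show "indicator {0..s} x * ennreal (?g x)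
        = indicator {0..s} x * ennreal (f_RL0 lamA h P_L (slant_dist x) * (x / slant_dist x))"
    proof (cases "x \<in> {0..s}")
      case True
      then have "sqrt ((slant_dist x)\<^sup>2 - h\<^sup>2) = x" by (simp add: slant_dist_def add_nonneg_nonneg)
      moreover have "(LINT y:{0..x}|lborel. y * (lamA * P_L y)) = lamA * (LINT y:{0..x}|lborel. y * P_L y)"
        by (simp add: set_integral_mult_right[symmetric] ac_simps)
      ultimately have "?g x = f_RL0 lamA h P_L (slant_dist x) * (x / slant_dist x)"
        using slant_dist_pos[of x] by (simp add: f_RL0_def field_simps)
      then show ?thesis by simp
    qed simp
  qed
  finally show ?thesis .
qed

lemma emeasure_LoS_event_distr:
  fixes T :: "real \<Rightarrow> real set" and p :: "real \<Rightarrow> real"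
  assumes T [measurable]: "Measurable.pred (borel \<Otimes>\<^sub>M borel) (\<lambda>(r, y). y \<in> T r)"
    and p: "\<And>x. x \<in> {0..s} \<Longrightarrow> prob {\<omega> \<in> space M. nearest_dist (\<Phi>T \<omega>) \<in> T (slant_dist x)} = p x"
    and p_nonneg: "\<And>x. x \<in> {0..s} \<Longrightarrow> 0 \<le> p x"
  shows "emeasure M {\<omega> \<in> space M. nearest_dist (\<Phi>L \<omega>) \<in> {0..s}
        \<and> nearest_dist (\<Phi>T \<omega>) \<in> T (slant_dist (nearest_dist (\<Phi>L \<omega>)))
        \<and> nearest_dist (\<Phi>N \<omega>) \<notin> {0..<NLoS_free_radius (slant_dist (nearest_dist (\<Phi>L \<omega>)))}}
    = (\<integral>\<^sup>+x. indicator {0..s} x * ennreal (p x * NLoS_void (slant_dist x))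
        \<partial>distr M borel (\<lambda>\<omega>. nearest_dist (\<Phi>L \<omega>)))"
proof -
  define X where "X i \<omega> = nearest_dist ((if i = 0 then \<Phi>T else if i = 1 then \<Phi>L else \<Phi>N) \<omega>)" for i :: nat and \<omega>
  let ?U = "\<lambda>x. UNIV - {0..<NLoS_free_radius (slant_dist x)}"
  have "emeasure M {\<omega> \<in> space M. X 1 \<omega> \<in> {0..s} \<and> X 0 \<omega> \<in> T (slant_dist (X 1 \<omega>)) \<and> X 2 \<omega> \<in> ?U (X 1 \<omega>)}
      = (\<integral>\<^sup>+x. indicator {0..s} x * emeasure M {\<omega> \<in> space M. X 0 \<omega> \<in> T (slant_dist x)}
          * emeasure M {\<omega> \<in> space M. X 2 \<omega> \<in> ?U x} \<partial>distr M borel (X 1))"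
  proof (rule emeasure_indep_vars_conditional)
    show "indep_vars (\<lambda>_. borel) X {0, 1, 2}" unfolding X_def by (rule indep_vars_tier_nearest_dist)
    let ?P = "\<lambda>w. fst w \<in> {0..s} \<and> (\<lambda>(r, y). y \<in> T r) (slant_dist (fst w), fst (snd w))
      \<and> \<not> (0 \<le> snd (snd w) \<and> snd (snd w) < NLoS_free_radius (slant_dist (fst w)))"
    have P: "Measurable.pred (borel \<Otimes>\<^sub>M borel \<Otimes>\<^sub>M borel) ?P" by measurable
    have E: "{w \<in> space (borel \<Otimes>\<^sub>M borel \<Otimes>\<^sub>M borel). ?P w}
        = {(x, y, z). x \<in> {0..s} \<and> y \<in> T (slant_dist x) \<and> z \<in> ?U x}"
      by (auto simp: space_pair_measure)
    show "{(x, y, z). x \<in> {0..s} \<and> y \<in> T (slant_dist x) \<and> z \<in> ?U x} \<in> sets (borel \<Otimes>\<^sub>M borel \<Otimes>\<^sub>M borel)"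
      using P unfolding pred_def E .
    show "T (slant_dist x) \<in> sets borel" for x
    proof -
      have "Measurable.pred borel (\<lambda>y. (\<lambda>(r, y). y \<in> T r) (slant_dist x, y))" by measurable
      then show ?thesis by (simp add: pred_def)
    qed
  qed auto
  also have "\<dots> = (\<integral>\<^sup>+x. indicator {0..s} x * ennreal (p x * NLoS_void (slant_dist x)) \<partial>distr M borel (X 1))"
    using p p_nonneg prob_NLoS_void
    by (intro nn_integral_cong) (auto simp: X_def emeasure_eq_measure ennreal_mult NLoS_void_def
        split: split_indicator)
  also have "X 1 = (\<lambda>\<omega>. nearest_dist (\<Phi>L \<omega>))" by (simp add: X_def fun_eq_iff)
  finally show ?thesis by (simp add: X_def)
qed

lemma emeasure_LoS_event:
  fixes T :: "real \<Rightarrow> real set" and p :: "real \<Rightarrow> real"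
  assumes s: "0 \<le> s"
    and T [measurable]: "Measurable.pred (borel \<Otimes>\<^sub>M borel) (\<lambda>(r, y). y \<in> T r)"
    and p: "\<And>x. x \<in> {0..s} \<Longrightarrow> prob {\<omega> \<in> space M. nearest_dist (\<Phi>T \<omega>) \<in> T (slant_dist x)} = p x"
    and p_meas [measurable]: "p \<in> borel_measurable borel"
    and p_nonneg: "\<And>x. x \<in> {0..s} \<Longrightarrow> 0 \<le> p x"
  shows "emeasure M {\<omega> \<in> space M. nearest_dist (\<Phi>L \<omega>) \<in> {0..s}
        \<and> nearest_dist (\<Phi>T \<omega>) \<in> T (slant_dist (nearest_dist (\<Phi>L \<omega>)))
        \<and> nearest_dist (\<Phi>N \<omega>) \<notin> {0..<NLoS_free_radius (slant_dist (nearest_dist (\<Phi>L \<omega>)))}}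
    = (\<integral>\<^sup>+x. indicator {0..s} x * ennreal (f_RL0 lamA h P_L (slant_dist x) * (x / slant_dist x)
        * (p x * NLoS_void (slant_dist x))) \<partial>lborel)"
proof -
  let ?f = "\<lambda>x. f_RL0 lamA h P_L (slant_dist x) * (x / slant_dist x)" and ?H = "\<lambda>x. p x * NLoS_void (slant_dist x)"
  have "(\<integral>\<^sup>+x. indicator {0..s} x * ennreal (?H x) \<partial>distr M borel (\<lambda>\<omega>. nearest_dist (\<Phi>L \<omega>)))
      = (\<integral>\<^sup>+x. indicator {0..s} x * ennreal (?f x) * ennreal (?H x) \<partial>lborel)"
  proof (rule nn_integral_indicator_density_eq[OF density_nearest_LoS_dist[OF s]])
    show "(\<lambda>x. ennreal (?H x)) \<in> borel_measurable borel" by measurable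
    show "(\<lambda>x. indicator {0..s} x * ennreal (?f x)) \<in> borel_measurable borel" by measurable
  qed simp_all
  also have "\<dots> = (\<integral>\<^sup>+x. indicator {0..s} x * ennreal (?f x * ?H x) \<partial>lborel)"
  proof (intro nn_integral_cong)
    fix x
    show "indicator {0..s} x * ennreal (?f x) * ennreal (?H x) = indicator {0..s} x * ennreal (?f x * ?H x)"
    proof (cases "x \<in> {0..s}")
      case True
      have "0 \<le> ?f x" using True f_RL0_nonneg[OF height_le_slant_dist] slant_dist_pos[of x] by simp
      moreover have "0 \<le> ?H x" using p_nonneg[OF True] by (simp add: NLoS_void_def)
      ultimately have "ennreal (?f x * ?H x) = ennreal (?f x) * ennreal (?H x)" by (rule ennreal_mult)
      then show ?thesis by (metis mult.assoc)
    qed simp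
  qed
  finally show ?thesis using emeasure_LoS_event_distr[OF T p p_nonneg] by simp
qed

lemma measure_LoS_event:
  fixes T :: "real \<Rightarrow> real set" and pT :: "real \<Rightarrow> real"
  assumes t: "h \<le> t"
    and T [measurable]: "Measurable.pred (borel \<Otimes>\<^sub>M borel) (\<lambda>(r, y). y \<in> T r)"
    and pT: "\<And>r. r \<in> {h..t} \<Longrightarrow> prob {\<omega> \<in> space M. nearest_dist (\<Phi>T \<omega>) \<in> T r} = pT r"
    and pT_meas [measurable]: "pT \<in> borel_measurable borel"
    and pT_nonneg: "\<And>r. r \<in> {h..t} \<Longrightarrow> 0 \<le> pT r"
  shows "measure M {\<omega> \<in> space M. nearest_dist (\<Phi>L \<omega>) \<in> {0..sqrt (t\<^sup>2 - h\<^sup>2)}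
        \<and> nearest_dist (\<Phi>T \<omega>) \<in> T (slant_dist (nearest_dist (\<Phi>L \<omega>)))
        \<and> nearest_dist (\<Phi>N \<omega>) \<notin> {0..<NLoS_free_radius (slant_dist (nearest_dist (\<Phi>L \<omega>)))}}
    = (LINT r:{h..t}|lborel. f_RL0 lamA h P_L r * pT r * NLoS_void r)"
proof -
  define s where "s = sqrt (t\<^sup>2 - h\<^sup>2)"
  have s: "0 \<le> s" "sqrt (s\<^sup>2 + h\<^sup>2) = t" using t pos(1) power_mono[of h t 2] by (auto simp: s_def)
  have slant_range: "slant_dist x \<in> {h..t}" if "x \<in> {0..s}" for x
    using that power_mono[of x s 2] s pos(1) by (auto simp: slant_dist_def simp flip: s(2))
  define F where "F r = f_RL0 lamA h P_L r * pT r * NLoS_void r" for r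
  have F_meas [measurable]: "F \<in> borel_measurable borel" unfolding F_def by measurable
  have "emeasure M {\<omega> \<in> space M. nearest_dist (\<Phi>L \<omega>) \<in> {0..s}
        \<and> nearest_dist (\<Phi>T \<omega>) \<in> T (slant_dist (nearest_dist (\<Phi>L \<omega>)))
        \<and> nearest_dist (\<Phi>N \<omega>) \<notin> {0..<NLoS_free_radius (slant_dist (nearest_dist (\<Phi>L \<omega>)))}}
      = (\<integral>\<^sup>+x. indicator {0..s} x * ennreal (f_RL0 lamA h P_L (slant_dist x) * (x / slant_dist x)
        * (pT (slant_dist x) * NLoS_void (slant_dist x))) \<partial>lborel)"
    using pT[OF slant_range] pT_nonneg[OF slant_range] by (intro emeasure_LoS_event[OF s(1) T]) auto
  also have "\<dots> = (\<integral>\<^sup>+x. indicator {0..s} x * ennreal (F (sqrt (x\<^sup>2 + h\<^sup>2)) * (x / sqrt (x\<^sup>2 + h\<^sup>2))) \<partial>lborel)"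
    by (intro nn_integral_cong) (simp add: F_def slant_dist_def ac_simps)
  also have "\<dots> = (\<integral>\<^sup>+r. indicator {h..t} r * ennreal (F r) \<partial>lborel)"
  proof -
    have "set_borel_measurable borel {h..sqrt (s\<^sup>2 + h\<^sup>2)} F"
      unfolding set_borel_measurable_def by measurable
    from nn_integral_substitution_hypot[OF pos(1) s(1) this] show ?thesis by (simp add: s(2))
  qed
  finally have emeasure_eq: "emeasure M {\<omega> \<in> space M. nearest_dist (\<Phi>L \<omega>) \<in> {0..s}
        \<and> nearest_dist (\<Phi>T \<omega>) \<in> T (slant_dist (nearest_dist (\<Phi>L \<omega>)))
        \<and> nearest_dist (\<Phi>N \<omega>) \<notin> {0..<NLoS_free_radius (slant_dist (nearest_dist (\<Phi>L \<omega>)))}}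
      = (\<integral>\<^sup>+r. indicator {h..t} r * ennreal (F r) \<partial>lborel)" .
  have F_nonneg: "0 \<le> F r" if "r \<in> {h..t}" for r
    using that f_RL0_nonneg pT_nonneg[OF that] by (simp add: F_def NLoS_void_def)
  from measure_eq_set_integral_of_emeasure[OF emeasure_eq _ F_meas F_nonneg] show ?thesis
    by (simp add: s_def F_def)
qed

lemma ppp_TBS_radial: "ppp M \<Phi>T (\<lambda>p. (\<lambda>_. lamT) (norm p))"
  using T_ppp by simp

lemma prob_TBS_beyond_RB: "prob {\<omega> \<in> space M. nearest_dist (\<Phi>T \<omega>) \<notin> {0..RB}} = 1 - QT"
  using ppp_radial_nearest_dist_beyond(1)[OF ppp_TBS_radial measurable_const, of RB] pos(2)
  by (simp add: set_integral_Icc_identity QT_eq)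

lemma prob_TBS_between:
  "prob {\<omega> \<in> space M. nearest_dist (\<Phi>T \<omega>) \<in> {tauTL r..RB}} = TBS_prob r"
proof (cases "tauTL r \<le> RB")
  case True
  have "0 \<le> tauTL r" using pos(6,7) by (simp add: tauTL_eq)
  from ppp_radial_nearest_dist_Icc[OF ppp_TBS_radial measurable_const this True]
  have "prob {\<omega> \<in> space M. nearest_dist (\<Phi>T \<omega>) \<in> {tauTL r..RB}} = exp (- pi * lamT * (tauTL r)\<^sup>2) - (1 - QT)"
    using \<open>0 \<le> tauTL r\<close> pos(2) by (simp add: set_integral_Icc_identity QT_eq mult_ac)
  then show ?thesis using True by (simp add: TBS_prob_def)
qed (simp add: TBS_prob_def)

lemma TBS_prob_nonneg: "0 \<le> TBS_prob r"
proof -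
  have "0 \<le> exp (- pi * lamT * (tauTL r)\<^sup>2) - (1 - QT)" if "tauTL r \<le> RB"
  proof -
    have "0 \<le> tauTL r" using pos(6,7) by (simp add: tauTL_eq)
    with that have "pi * lamT * (tauTL r)\<^sup>2 \<le> pi * lamT * RB\<^sup>2"
      using intensities by (intro mult_left_mono power_mono) auto
    then show ?thesis by (simp add: QT_eq)
  qed
  then show ?thesis by (simp add: TBS_prob_def)
qed

lemma measure_LoS_no_TBS:
  assumes t: "h \<le> t"
  shows "measure M {\<omega> \<in> space M. dist3 h (\<Phi>L \<omega>) \<le> t \<and> \<not> (\<Phi>T \<omega> \<noteq> {} \<and> nearest (\<Phi>T \<omega>) \<le> RB)
      \<and> assoc_LoS h RB \<alpha>T \<alpha>L \<alpha>N \<eta>T \<eta>L \<eta>N (\<Phi>T \<omega>) (\<Phi>L \<omega>) (\<Phi>N \<omega>)}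
    = (LINT r:{h..t}|lborel. f_RL0 lamA h P_L r * (1 - QT) * NLoS_void r)"
    (is "measure M {\<omega> \<in> space M. ?E \<omega>} = _")
proof -
  let ?A = "\<lambda>\<omega>. nearest_dist (\<Phi>L \<omega>) \<in> {0..sqrt (t\<^sup>2 - h\<^sup>2)}
    \<and> nearest_dist (\<Phi>T \<omega>) \<in> UNIV - {0..RB}
    \<and> nearest_dist (\<Phi>N \<omega>) \<notin> {0..<NLoS_free_radius (slant_dist (nearest_dist (\<Phi>L \<omega>)))}"
  have "?E \<omega> \<longleftrightarrow> ?A \<omega>" for \<omega>
    using assoc_LoS_no_TBS_iff[OF t, of "\<Phi>L \<omega>" "\<Phi>T \<omega>" "\<Phi>N \<omega>"] by simp
  moreover have "0 \<le> 1 - QT" by (simp add: QT_eq)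
  then have "measure M {\<omega> \<in> space M. ?A \<omega>} = (LINT r:{h..t}|lborel. f_RL0 lamA h P_L r * (1 - QT) * NLoS_void r)"
    using prob_TBS_beyond_RB by (intro measure_LoS_event[OF t, where T = "\<lambda>_. UNIV - {0..RB}"]) auto
  ultimately show ?thesis by simp
qed

lemma measure_LoS_TBS:
  assumes t: "h \<le> t"
  shows "measure M {\<omega> \<in> space M. dist3 h (\<Phi>L \<omega>) \<le> t \<and> (\<Phi>T \<omega> \<noteq> {} \<and> nearest (\<Phi>T \<omega>) \<le> RB)
      \<and> assoc_LoS h RB \<alpha>T \<alpha>L \<alpha>N \<eta>T \<eta>L \<eta>N (\<Phi>T \<omega>) (\<Phi>L \<omega>) (\<Phi>N \<omega>)}
    = (LINT r:{h..t}|lborel. f_RL0 lamA h P_L r * TBS_prob r * NLoS_void r)"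
    (is "measure M {\<omega> \<in> space M. ?E \<omega>} = _")
proof -
  note [measurable] = ppp_nearest_dist_borel_measurable[OF T_ppp]
    ppp_nearest_dist_borel_measurable[OF L_ppp] ppp_nearest_dist_borel_measurable[OF N_ppp]
  let ?L = "\<lambda>\<omega>. nearest_dist (\<Phi>L \<omega>) \<in> {0..sqrt (t\<^sup>2 - h\<^sup>2)}"
  let ?N = "\<lambda>\<omega>. nearest_dist (\<Phi>N \<omega>) \<notin> {0..<NLoS_free_radius (slant_dist (nearest_dist (\<Phi>L \<omega>)))}"
  let ?A = "{\<omega> \<in> space M. ?L \<omega> \<and> nearest_dist (\<Phi>T \<omega>) \<in> {tauTL (slant_dist (nearest_dist (\<Phi>L \<omega>)))..RB} \<and> ?N \<omega>}"
  let ?B = "{\<omega> \<in> space M. nearest_dist (\<Phi>T \<omega>) = 0 \<and> ?L \<omega> \<and> ?N \<omega>}"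
  from ppp_radial_nearest_dist_Icc[OF ppp_TBS_radial measurable_const order_refl order_refl]
  have "prob {\<omega> \<in> space M. nearest_dist (\<Phi>T \<omega>) \<in> {0..0}} = 0" by simp
  moreover have "{\<omega> \<in> space M. nearest_dist (\<Phi>T \<omega>) \<in> {0..0}} \<in> sets M" by measurable
  ultimately have "{\<omega> \<in> space M. nearest_dist (\<Phi>T \<omega>) \<in> {0..0}} \<in> null_sets M"
    by (simp add: null_sets_def emeasure_eq_measure)
  then have "?B \<in> null_sets M" by (rule null_sets_subset) auto
  moreover have "?A \<in> sets M"
  proof -
    have "?A = {\<omega> \<in> space M. ?L \<omega> \<and> tauTL (slant_dist (nearest_dist (\<Phi>L \<omega>))) \<le> nearest_dist (\<Phi>T \<omega>)
        \<and> nearest_dist (\<Phi>T \<omega>) \<le> RB \<and> \<not> (0 \<le> nearest_dist (\<Phi>N \<omega>)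
        \<and> nearest_dist (\<Phi>N \<omega>) < NLoS_free_radius (slant_dist (nearest_dist (\<Phi>L \<omega>))))}"
      by auto
    also have "\<dots> \<in> sets M" by measurable
    finally show ?thesis .
  qed
  moreover have "measure M ?A = (LINT r:{h..t}|lborel. f_RL0 lamA h P_L r * TBS_prob r * NLoS_void r)"
  proof (rule measure_LoS_event[OF t])
    have "Measurable.pred (borel \<Otimes>\<^sub>M borel) (\<lambda>w. tauTL (fst w) \<le> snd w \<and> snd w \<le> RB)" by measurable
    then show "Measurable.pred (borel \<Otimes>\<^sub>M borel) (\<lambda>(r, y). y \<in> {tauTL r..RB})"
      by (simp add: case_prod_beta')
    show "TBS_prob \<in> borel_measurable borel" unfolding TBS_prob_def[abs_def] by measurable
  qed (use prob_TBS_between TBS_prob_nonneg in auto)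
  ultimately have "measure M (?A \<union> ?B) = (LINT r:{h..t}|lborel. f_RL0 lamA h P_L r * TBS_prob r * NLoS_void r)"
    by (simp add: measure_Un_null_set)
  moreover have "?E \<omega> \<longleftrightarrow> \<omega> \<in> ?A \<union> ?B" if "\<omega> \<in> space M" for \<omega>
    using that assoc_LoS_TBS_iff[OF t, of "\<Phi>L \<omega>" "\<Phi>T \<omega>" "\<Phi>N \<omega>"] by auto
  then have "{\<omega> \<in> space M. ?E \<omega>} = ?A \<union> ?B" by auto
  ultimately show ?thesis by simp
qed

lemma measure_LoS_no_TBS_piecewise:
  assumes "h \<le> t" "AL \<noteq> 0"
  shows "measure M {\<omega> \<in> space M. dist3 h (\<Phi>L \<omega>) \<le> t \<and> \<not> (\<Phi>T \<omega> \<noteq> {} \<and> nearest (\<Phi>T \<omega>) \<le> RB)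
      \<and> assoc_LoS h RB \<alpha>T \<alpha>L \<alpha>N \<eta>T \<eta>L \<eta>N (\<Phi>T \<omega>) (\<Phi>L \<omega>) (\<Phi>N \<omega>)}
    = (LINT r:{h..t}|lborel. AL *
        (if r \<le> lLh then f_RL0 lamA h P_L r / AL * (1 - QT)
         else f_RL0 lamA h P_L r / AL * (1 - QT)
           * exp (- 2 * pi * lamA * (LINT x:{0..sqrt ((tauNL r)\<^sup>2 - h\<^sup>2)}|lborel. x * (1 - P_L x)))))"
  unfolding measure_LoS_no_TBS[OF assms(1)] using assms(2) pos(1)
  by (intro set_lebesgue_integral_cong) (auto simp: NLoS_void_eq)

lemma measure_LoS_TBS_piecewise:
  assumes "h \<le> t" "AL \<noteq> 0"
  shows "measure M {\<omega> \<in> space M. dist3 h (\<Phi>L \<omega>) \<le> t \<and> (\<Phi>T \<omega> \<noteq> {} \<and> nearest (\<Phi>T \<omega>) \<le> RB)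
      \<and> assoc_LoS h RB \<alpha>T \<alpha>L \<alpha>N \<eta>T \<eta>L \<eta>N (\<Phi>T \<omega>) (\<Phi>L \<omega>) (\<Phi>N \<omega>)}
    = (LINT r:{h..t}|lborel. AL *
        (if r > lLT then 0
         else if lLh > lLT \<or> r \<le> lLh
           then f_RL0 lamA h P_L r / AL * (exp (- pi * lamT * (tauTL r)\<^sup>2) - (1 - QT))
         else f_RL0 lamA h P_L r / AL * (exp (- pi * lamT * (tauTL r)\<^sup>2) - (1 - QT))
           * exp (- 2 * pi * lamA * (LINT x:{0..sqrt ((tauNL r)\<^sup>2 - h\<^sup>2)}|lborel. x * (1 - P_L x)))))"
  unfolding measure_LoS_TBS[OF assms(1)] using assms(2) pos(1)
  by (intro set_lebesgue_integral_cong) (auto simp: NLoS_void_eq TBS_prob_eq)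

end

theorem lemma7:
  fixes M :: "'a measure"
    and \<Phi>T \<Phi>L \<Phi>N :: "'a \<Rightarrow> (real \<times> real) set"
    and P_L :: "real \<Rightarrow> real"
    and lamT lamA h RB \<alpha>T \<alpha>L \<alpha>N \<eta>T \<eta>L \<eta>N :: real
  assumes M: "prob_space M"
    and pos: "lamT > 0" "lamA > 0" "h > 0" "RB > 0" "\<alpha>T > 0" "\<alpha>L > 0" "\<alpha>N > 0"
             "\<eta>T > 0" "\<eta>L > 0" "\<eta>N > 0"
    and PL_meas: "P_L \<in> borel_measurable borel"
    and PL_range: "\<forall>x\<ge>0. 0 \<le> P_L x \<and> P_L x \<le> 1"
    and T_ppp: "ppp M \<Phi>T (\<lambda>_. lamT)"
    and L_ppp: "ppp M \<Phi>L (\<lambda>p. lamA * P_L (norm p))"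
    and N_ppp: "ppp M \<Phi>N (\<lambda>p. lamA * (1 - P_L (norm p)))"
    and indep: "indep_pps M (\<lambda>i. if i = 0 then \<Phi>T else if i = 1 then \<Phi>L else \<Phi>N) {0, 1, 2}"
  defines "AL \<equiv> measure M {\<omega> \<in> space M. assoc_LoS h RB \<alpha>T \<alpha>L \<alpha>N \<eta>T \<eta>L \<eta>N (\<Phi>T \<omega>) (\<Phi>L \<omega>) (\<Phi>N \<omega>)}"
    and "QT \<equiv> 1 - exp (- pi * lamT * RB\<^sup>2)"
    and "lLh \<equiv> (\<eta>L / \<eta>N) powr (1 / \<alpha>L) * h powr (\<alpha>N / \<alpha>L)"
    and "lLT \<equiv> (\<eta>L / \<eta>T) powr (1 / \<alpha>L) * RB powr (\<alpha>T / \<alpha>L)"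
    and "tauNL \<equiv> \<lambda>r. max h ((\<eta>N / \<eta>L) powr (1 / \<alpha>N) * r powr (\<alpha>L / \<alpha>N))"
    and "tauTL \<equiv> \<lambda>r. (\<eta>T / \<eta>L) powr (1 / \<alpha>T) * r powr (\<alpha>L / \<alpha>T)"
  assumes AL_pos: "AL > 0"
  shows "\<forall>t\<ge>h.
           measure M {\<omega> \<in> space M. dist3 h (\<Phi>L \<omega>) \<le> t
                \<and> \<not> (\<Phi>T \<omega> \<noteq> {} \<and> nearest (\<Phi>T \<omega>) \<le> RB)
                \<and> assoc_LoS h RB \<alpha>T \<alpha>L \<alpha>N \<eta>T \<eta>L \<eta>N (\<Phi>T \<omega>) (\<Phi>L \<omega>) (\<Phi>N \<omega>)}
             = (LINT r:{h..t}|lborel. AL *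
                  (if r \<le> lLh then f_RL0 lamA h P_L r / AL * (1 - QT)
                   else f_RL0 lamA h P_L r / AL * (1 - QT)
                        * exp (- 2 * pi * lamA *
                            (LINT x:{0..sqrt ((tauNL r)\<^sup>2 - h\<^sup>2)}|lborel. x * (1 - P_L x)))))
         \<and> measure M {\<omega> \<in> space M. dist3 h (\<Phi>L \<omega>) \<le> t
                \<and> (\<Phi>T \<omega> \<noteq> {} \<and> nearest (\<Phi>T \<omega>) \<le> RB)
                \<and> assoc_LoS h RB \<alpha>T \<alpha>L \<alpha>N \<eta>T \<eta>L \<eta>N (\<Phi>T \<omega>) (\<Phi>L \<omega>) (\<Phi>N \<omega>)}
             = (LINT r:{h..t}|lborel. AL *
                  (if r > lLT then 0
                   else if lLh > lLT \<or> r \<le> lLh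
                     then f_RL0 lamA h P_L r / AL * (exp (- pi * lamT * (tauTL r)\<^sup>2) - (1 - QT))
                   else f_RL0 lamA h P_L r / AL * (exp (- pi * lamT * (tauTL r)\<^sup>2) - (1 - QT))
                        * exp (- 2 * pi * lamA *
                            (LINT x:{0..sqrt ((tauNL r)\<^sup>2 - h\<^sup>2)}|lborel. x * (1 - P_L x)))))"
proof -
  interpret LoS_association h RB \<alpha>T \<alpha>L \<alpha>N \<eta>T \<eta>L \<eta>N lLh lLT tauNL tauTL M \<Phi>T \<Phi>L \<Phi>N P_L lamT lamA QT
    using assms
    by (intro LoS_association.intro association_rule.intro LoS_association_axioms.intro)
      (simp_all add: lLh_def lLT_def tauNL_def tauTL_def QT_def)
  have "AL \<noteq> 0" using AL_pos by simp
  then show ?thesis using measure_LoS_no_TBS_piecewise measure_LoS_TBS_piecewise by blast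
qed

end
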